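(* Let $m,T>0$, $\gamma=\frac{T}{\pi m}$, and let $\bar{\mathcal{L}}=-\partial_t^4+\gamma^2\partial_t^2$ on $\mathrm{L}^2([0,\pi],\mathbb{R})$ with domain $\{x\in \mathrm{H}^4([0,\pi]): x(0)=x(\pi)=0,\ \tfrac{T}{\pi\gamma}x''(0)=x'(0),\ \tfrac{T}{\pi\gamma}x''(\pi)=-x'(\pi)\}$. Let $\lambda_k$, $k\in\mathbb{N}$, be the eigenvalues of $-\bar{\mathcal{L}}$ (in increasing order) and $e_k$ corresponding eigenfunctions, and set $(f_k^{(1)},f_k^{(2)},f_k^{(3)},f_k^{(4)})=(\sin kt,\cos kt,e^{-kt},e^{-k(\pi-t)})$. Then: (a) $\lambda_k=k^4+\mathcal{O}(k^2)$ as $k\to\infty$; (b) the eigenfunctions can be chosen so that there exist functions $g_k^{(i)}$ with $e_k(t)=\sin(kt)+\frac1k\sum_{i=1}^4g_k^{(i)}(t)f_k^{(i)}(t)$ for all $t\in[0,\pi]$, and $\sup_{i=1,\dots,4}\sup_{k\in\mathbb{N}}\|g_k^{(i)}\|_{\mathrm{C}^j}<\infty$ for every $j\ge0$.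
   Context: $\|\cdot\|_{\mathrm{C}^j}$ is the norm of $j$ times continuously differentiable functions on $[0,\pi]$. *)

theory Defs
  imports "HOL-Analysis.Analysis" "HOL-Library.Landau_Symbols"
begin

text \<open>Eigenfunctions of this constant-coefficient
  ODE in H^4 are smooth, so we state it classically: x is C^4 on [0,pi]
  (one-sided derivatives at the end points) and satisfies -Lbar x = mu x.\<close>
definition in_eigenspace :: "real \<Rightarrow> real \<Rightarrow> real \<Rightarrow> (real \<Rightarrow> real) \<Rightarrow> bool" where
  "in_eigenspace T \<gamma> mu x \<longleftrightarrow>
     (\<exists>x1 x2 x3 x4 :: real \<Rightarrow> real.
        (\<forall>t\<in>{0..pi}. (x has_real_derivative x1 t) (at t within {0..pi})) \<and>
        (\<forall>t\<in>{0..pi}. (x1 has_real_derivative x2 t) (at t within {0..pi})) \<and>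
        (\<forall>t\<in>{0..pi}. (x2 has_real_derivative x3 t) (at t within {0..pi})) \<and>
        (\<forall>t\<in>{0..pi}. (x3 has_real_derivative x4 t) (at t within {0..pi})) \<and>
        continuous_on {0..pi} x4 \<and>
        (\<forall>t\<in>{0..pi}. x4 t - \<gamma>\<^sup>2 * x2 t = mu * x t) \<and>
        x 0 = 0 \<and> x pi = 0 \<and>
        T / (pi * \<gamma>) * x2 0 = x1 0 \<and>
        T / (pi * \<gamma>) * x2 pi = - x1 pi)"

text \<open>An eigenfunction: a nonzero element of the eigenspace (nonzero as an element of
  L^2; for continuous functions this means nonzero somewhere on [0,pi]).\<close>
definition is_eigenfunction :: "real \<Rightarrow> real \<Rightarrow> real \<Rightarrow> (real \<Rightarrow> real) \<Rightarrow> bool" where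
  "is_eigenfunction T \<gamma> mu x \<longleftrightarrow> in_eigenspace T \<gamma> mu x \<and> (\<exists>t\<in>{0..pi}. x t \<noteq> 0)"

definition lin_indep_on :: "real set \<Rightarrow> (real \<Rightarrow> real) set \<Rightarrow> bool" where
  "lin_indep_on S F \<longleftrightarrow>
     (\<forall>c :: (real \<Rightarrow> real) \<Rightarrow> real.
        (\<forall>t\<in>S. (\<Sum>f\<in>F. c f * f t) = 0) \<longrightarrow> (\<forall>f\<in>F. c f = 0))"

text \<open>(Geometric = algebraic, the operator being self-adjoint) multiplicity of mu:
  the dimension of the eigenspace.  It is 0 iff mu is not an eigenvalue.\<close>
definition eig_mult :: "real \<Rightarrow> real \<Rightarrow> real \<Rightarrow> nat" where
  "eig_mult T \<gamma> mu = Sup {card F | F. finite F \<and> (\<forall>x\<in>F. in_eigenspace T \<gamma> mu x)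
                                        \<and> lin_indep_on {0..pi} F}"

text \<open>C^j regularity on [0,pi] together with a bound on the C^j norm
  (max over l \<le> j of the sup norm of the l-th derivative; equivalent to the
  sum-norm up to the factor j+1).\<close>
definition Cj_norm_le :: "nat \<Rightarrow> (real \<Rightarrow> real) \<Rightarrow> real \<Rightarrow> bool" where
  "Cj_norm_le j g B \<longleftrightarrow>
     (\<exists>D :: nat \<Rightarrow> real \<Rightarrow> real.
        (\<forall>t\<in>{0..pi}. D 0 t = g t) \<and>
        (\<forall>l<j. \<forall>t\<in>{0..pi}. (D l has_real_derivative D (Suc l) t) (at t within {0..pi})) \<and>
        (\<forall>l\<le>j. continuous_on {0..pi} (D l)) \<and>
        (\<forall>l\<le>j. \<forall>t\<in>{0..pi}. \<bar>D l t\<bar> \<le> B))"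

definition fbasis :: "nat \<Rightarrow> nat \<Rightarrow> real \<Rightarrow> real" where
  "fbasis i k t =
     (if i = 1 then sin (real k * t)
      else if i = 2 then cos (real k * t)
      else if i = 3 then exp (- real k * t)
      else exp (- real k * (pi - t)))"

end

theory Submission
  imports Defs
begin

text \<open>For \<open>\<mu> = \<omega>\<^sup>2 p\<^sup>2\<close> with \<open>p\<^sup>2 = \<omega>\<^sup>2 + \<gamma>\<^sup>2\<close> every solution of \<open>x'''' - \<gamma>\<^sup>2 x'' = \<mu> x\<close>
  combines \<open>cos\<close>, \<open>sin\<close> of \<open>\<omega> (t - \<pi>/2)\<close> and \<open>cosh\<close>, \<open>sinh\<close> of \<open>p (t - \<pi>/2)\<close>.  The
  boundary conditions split into an even and an odd part, and each says that the phase
  \<open>\<psi>(\<omega>) = \<omega>\<pi>/2 - arctan (\<omega> / N(\<omega>))\<close> is an odd, resp. even, multiple of \<open>\<pi>/2\<close>.  As \<open>\<psi>\<close>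
  is increasing with \<open>(\<omega> - 1)\<pi>/2 < \<psi>(\<omega>) < \<omega>\<pi>/2\<close>, there is exactly one simple eigenfrequency
  \<open>\<omega>\<^sub>k \<in> (k, k + 1)\<close> for every \<open>k\<close>, while \<open>\<mu> \<le> 0\<close> is excluded by an energy identity; so
  \<open>\<lambda>\<^sub>k = \<omega>\<^sub>k\<^sup>2 (\<omega>\<^sub>k\<^sup>2 + \<gamma>\<^sup>2)\<close>.  Since \<open>N(\<omega>) \<ge> 2m\<omega>\<^sup>2\<close>, the phase equation gives
  \<open>\<omega>\<^sub>k - k = O(1/k)\<close>, which yields (a) and keeps the corrections
  \<open>k (sin (\<omega>\<^sub>k (t - \<pi>/2) + k\<pi>/2) - sin (k t))\<close> and the boundary layers of \<open>e\<^sub>k\<close> bounded in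
  every \<open>C\<^sup>j\<close>.\<close>

lemma linear_ode_zero:
  fixes f :: "real \<Rightarrow> real"
  assumes S: "convex S"
    and deriv: "\<And>t. t \<in> S \<Longrightarrow> (f has_real_derivative c * f t) (at t within S)"
    and t0: "t0 \<in> S" "f t0 = 0" and t: "t \<in> S"
  shows "f t = 0"
proof -
  have "\<exists>K. \<forall>x\<in>S. f x * exp (- c * x) = K"
  proof (rule has_field_derivative_zero_constant[OF S])
    fix x assume x: "x \<in> S"
    have "((\<lambda>x. f x * exp (- c * x)) has_real_derivative
          (c * f x) * exp (- c * x) + f x * (exp (- c * x) * (- c * 1))) (at x within S)"
      by (rule derivative_eq_intros deriv[OF x] refl | simp)+
    then show "((\<lambda>x. f x * exp (- c * x)) has_real_derivative 0) (at x within S)"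
      by (simp add: algebra_simps)
  qed
  then obtain K where K: "\<And>x. x \<in> S \<Longrightarrow> f x * exp (- c * x) = K" by blast
  have "K = 0" using K[OF t0(1)] t0(2) by simp
  then show ?thesis using K[OF t] by simp
qed

lemma harmonic_ode_zero:
  fixes w w1 w2 :: "real \<Rightarrow> real"
  assumes S: "convex S"
    and d0: "\<And>t. t \<in> S \<Longrightarrow> (w has_real_derivative w1 t) (at t within S)"
    and d1: "\<And>t. t \<in> S \<Longrightarrow> (w1 has_real_derivative w2 t) (at t within S)"
    and eq: "\<And>t. t \<in> S \<Longrightarrow> w2 t = - (om\<^sup>2 * w t)" and om: "om > 0"
    and t0: "t0 \<in> S" "w t0 = 0" "w1 t0 = 0" and t: "t \<in> S"
  shows "w t = 0 \<and> w1 t = 0"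
proof -
  have "\<exists>K. \<forall>x\<in>S. (w1 x)\<^sup>2 + om\<^sup>2 * (w x)\<^sup>2 = K"
  proof (rule has_field_derivative_zero_constant[OF S])
    fix x assume x: "x \<in> S"
    have "((\<lambda>x. (w1 x)\<^sup>2 + om\<^sup>2 * (w x)\<^sup>2) has_real_derivative
          2 * w1 x * w2 x + om\<^sup>2 * (2 * w x * w1 x)) (at x within S)"
      by (rule derivative_eq_intros d0[OF x] d1[OF x] refl | simp)+
    then show "((\<lambda>x. (w1 x)\<^sup>2 + om\<^sup>2 * (w x)\<^sup>2) has_real_derivative 0) (at x within S)"
      using eq[OF x] by (simp add: algebra_simps)
  qed
  then obtain K where K: "\<And>x. x \<in> S \<Longrightarrow> (w1 x)\<^sup>2 + om\<^sup>2 * (w x)\<^sup>2 = K" by blast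
  have "K = 0" using K[OF t0(1)] t0(2,3) by simp
  then have "(w1 t)\<^sup>2 + om\<^sup>2 * (w t)\<^sup>2 = 0" using K[OF t] by simp
  moreover have "om\<^sup>2 * (w t)\<^sup>2 \<ge> 0" "(w1 t)\<^sup>2 \<ge> 0" by simp_all
  ultimately have "(w1 t)\<^sup>2 = 0" "om\<^sup>2 * (w t)\<^sup>2 = 0" by linarith+
  then show ?thesis using om by simp
qed

text \<open>The operator factors as \<open>(D\<^sup>2 - p\<^sup>2)(D\<^sup>2 + \<omega>\<^sup>2)\<close>: with \<open>y = v'' + \<omega>\<^sup>2 v\<close>,
  first \<open>y' - p y\<close> and then \<open>y\<close> solve first order linear equations, and finally
  \<open>v\<close> solves the harmonic oscillator equation, all with zero data at \<open>L\<close>.\<close>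
lemma fourth_order_ode_zero:
  fixes v v1 v2 v3 v4 :: "real \<Rightarrow> real"
  assumes S: "convex S" and om: "om > 0" and p: "p > 0" and pe: "p\<^sup>2 = om\<^sup>2 + g\<^sup>2"
    and d0: "\<And>t. t \<in> S \<Longrightarrow> (v has_real_derivative v1 t) (at t within S)"
    and d1: "\<And>t. t \<in> S \<Longrightarrow> (v1 has_real_derivative v2 t) (at t within S)"
    and d2: "\<And>t. t \<in> S \<Longrightarrow> (v2 has_real_derivative v3 t) (at t within S)"
    and d3: "\<And>t. t \<in> S \<Longrightarrow> (v3 has_real_derivative v4 t) (at t within S)"
    and eq: "\<And>t. t \<in> S \<Longrightarrow> v4 t - g\<^sup>2 * v2 t = om\<^sup>2 * p\<^sup>2 * v t"
    and L: "L \<in> S" and data: "v L = 0" "v1 L = 0" "v2 L = 0" "v3 L = 0"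
    and t: "t \<in> S"
  shows "v t = 0 \<and> v1 t = 0 \<and> v2 t = 0"
proof -
  define y where "y t = v2 t + om\<^sup>2 * v t" for t
  define y1 where "y1 t = v3 t + om\<^sup>2 * v1 t" for t
  define z where "z t = y1 t - p * y t" for t
  have dy: "(y has_real_derivative y1 t) (at t within S)" if "t \<in> S" for t
    unfolding y_def[abs_def] y1_def using d2[OF that] d0[OF that]
    by (intro derivative_intros DERIV_cmult) auto
  have dy1: "(y1 has_real_derivative p\<^sup>2 * y t) (at t within S)" if "t \<in> S" for t
  proof -
    have "(y1 has_real_derivative v4 t + om\<^sup>2 * v2 t) (at t within S)"
      unfolding y1_def[abs_def] using d3[OF that] d1[OF that]
      by (intro derivative_intros DERIV_cmult) auto
    moreover have "v4 t + om\<^sup>2 * v2 t = p\<^sup>2 * y t"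
      using eq[OF that] pe unfolding y_def by (simp add: algebra_simps)
    ultimately show ?thesis by simp
  qed
  have dz: "(z has_real_derivative (- p) * z t) (at t within S)" if "t \<in> S" for t
  proof -
    have "(z has_real_derivative p\<^sup>2 * y t - p * y1 t) (at t within S)"
      unfolding z_def[abs_def] using dy1[OF that] dy[OF that]
      by (intro derivative_intros DERIV_cmult) auto
    then show ?thesis unfolding z_def by (simp add: algebra_simps power2_eq_square)
  qed
  have zL: "z L = 0" using data by (simp add: z_def y1_def y_def)
  have "z t = 0" if "t \<in> S" for t using linear_ode_zero[OF S dz L zL that] .
  then have dy': "(y has_real_derivative p * y t) (at t within S)" if "t \<in> S" for t
    using dy[OF that] that unfolding z_def by simp
  have yL: "y L = 0" using data by (simp add: y_def)
  have v2: "v2 t = - (om\<^sup>2 * v t)" if "t \<in> S" for t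
    using linear_ode_zero[OF S dy' L yL that] unfolding y_def by linarith
  have "v t = 0 \<and> v1 t = 0" by (rule harmonic_ode_zero[OF S d0 d1 v2 om L data(1,2) t])
  then show ?thesis using v2[OF t] by simp
qed

section \<open>The general solution\<close>

text \<open>For \<open>\<mu> = \<omega>\<^sup>2 p\<^sup>2\<close> with \<open>p\<^sup>2 = \<omega>\<^sup>2 + \<gamma>\<^sup>2\<close> the characteristic roots of
  \<open>x'''' - \<gamma>\<^sup>2 x'' = \<mu> x\<close> are \<open>\<plusminus>i\<omega>, \<plusminus>p\<close>.  The general solution is centred at \<open>\<pi>/2\<close>
  so that the boundary conditions split into an even and an odd part.\<close>

definition sol :: "real \<Rightarrow> real \<Rightarrow> real \<Rightarrow> real \<Rightarrow> real \<Rightarrow> real \<Rightarrow> real \<Rightarrow> real" where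
  "sol om p A B C D t = A * cos (om * (t - pi/2)) + B * sin (om * (t - pi/2))
      + C * cosh (p * (t - pi/2)) + D * sinh (p * (t - pi/2))"

definition sol' :: "real \<Rightarrow> real \<Rightarrow> real \<Rightarrow> real \<Rightarrow> real \<Rightarrow> real \<Rightarrow> real \<Rightarrow> real" where
  "sol' om p A B C D t = - A * om * sin (om * (t - pi/2)) + B * om * cos (om * (t - pi/2))
      + C * p * sinh (p * (t - pi/2)) + D * p * cosh (p * (t - pi/2))"

definition sol'' :: "real \<Rightarrow> real \<Rightarrow> real \<Rightarrow> real \<Rightarrow> real \<Rightarrow> real \<Rightarrow> real \<Rightarrow> real" where
  "sol'' om p A B C D t = - A * om^2 * cos (om * (t - pi/2)) - B * om^2 * sin (om * (t - pi/2))
      + C * p^2 * cosh (p * (t - pi/2)) + D * p^2 * sinh (p * (t - pi/2))"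

definition sol''' :: "real \<Rightarrow> real \<Rightarrow> real \<Rightarrow> real \<Rightarrow> real \<Rightarrow> real \<Rightarrow> real \<Rightarrow> real" where
  "sol''' om p A B C D t = A * om^3 * sin (om * (t - pi/2)) - B * om^3 * cos (om * (t - pi/2))
      + C * p^3 * sinh (p * (t - pi/2)) + D * p^3 * cosh (p * (t - pi/2))"

definition sol'''' :: "real \<Rightarrow> real \<Rightarrow> real \<Rightarrow> real \<Rightarrow> real \<Rightarrow> real \<Rightarrow> real \<Rightarrow> real" where
  "sol'''' om p A B C D t = A * om^4 * cos (om * (t - pi/2)) + B * om^4 * sin (om * (t - pi/2))
      + C * p^4 * cosh (p * (t - pi/2)) + D * p^4 * sinh (p * (t - pi/2))"

lemma sol_deriv: "(sol om p A B C D has_real_derivative sol' om p A B C D t) (at t within S)"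
  unfolding sol_def[abs_def] sol'_def
  by (rule derivative_eq_intros refl | simp add: algebra_simps)+

lemma sol'_deriv: "(sol' om p A B C D has_real_derivative sol'' om p A B C D t) (at t within S)"
  unfolding sol'_def[abs_def] sol''_def
  by (rule derivative_eq_intros refl | simp add: algebra_simps power2_eq_square)+

lemma sol''_deriv: "(sol'' om p A B C D has_real_derivative sol''' om p A B C D t) (at t within S)"
  unfolding sol''_def[abs_def] sol'''_def
  by (rule derivative_eq_intros refl | simp add: algebra_simps power2_eq_square power3_eq_cube)+

lemma sol'''_deriv: "(sol''' om p A B C D has_real_derivative sol'''' om p A B C D t) (at t within S)"
  unfolding sol'''_def[abs_def] sol''''_def
  by (rule derivative_eq_intros refl | simp add: algebra_simps power3_eq_cube power4_eq_xxxx)+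

lemma sol_ode:
  assumes "p^2 = om^2 + g^2"
  shows "sol'''' om p A B C D t - g^2 * sol'' om p A B C D t = om^2 * p^2 * sol om p A B C D t"
proof -
  have g2: "g^2 = p^2 - om^2" using assms by simp
  show ?thesis unfolding sol''''_def sol''_def sol_def g2
    by (simp add: algebra_simps power2_eq_square power4_eq_xxxx)
qed

lemma sol_at_centre:
  "sol om p A B C D (pi/2) = A + C"
  "sol' om p A B C D (pi/2) = om * B + p * D"
  "sol'' om p A B C D (pi/2) = p^2 * C - om^2 * A"
  "sol''' om p A B C D (pi/2) = p^3 * D - om^3 * B"
  by (simp_all add: sol_def sol'_def sol''_def sol'''_def algebra_simps)

lemma ode_sol_rep:
  fixes x x1 x2 x3 x4 :: "real \<Rightarrow> real"
  assumes S: "convex S" "pi/2 \<in> S"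
    and om: "om > 0" and p: "p > 0" and pe: "p\<^sup>2 = om\<^sup>2 + g\<^sup>2"
    and d0: "\<forall>t\<in>S. (x has_real_derivative x1 t) (at t within S)"
    and d1: "\<forall>t\<in>S. (x1 has_real_derivative x2 t) (at t within S)"
    and d2: "\<forall>t\<in>S. (x2 has_real_derivative x3 t) (at t within S)"
    and d3: "\<forall>t\<in>S. (x3 has_real_derivative x4 t) (at t within S)"
    and eq: "\<forall>t\<in>S. x4 t - g\<^sup>2 * x2 t = om\<^sup>2 * p\<^sup>2 * x t"
  shows "\<exists>A B C D. \<forall>t\<in>S. x t = sol om p A B C D t \<and> x1 t = sol' om p A B C D t
            \<and> x2 t = sol'' om p A B C D t"
proof -
  define L where "L = pi/2"
  define Q where "Q = om\<^sup>2 + p\<^sup>2"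
  have Q: "Q > 0" unfolding Q_def using om by (intro add_pos_nonneg) auto
  define A where "A = (p\<^sup>2 * x L - x2 L) / Q"
  define C where "C = (om\<^sup>2 * x L + x2 L) / Q"
  define B where "B = (p\<^sup>2 * x1 L - x3 L) / (om * Q)"
  define D where "D = (om\<^sup>2 * x1 L + x3 L) / (p * Q)"
  note centre = sol_at_centre[of om p A B C D, folded L_def]
  have data: "x L - sol om p A B C D L = 0" "x1 L - sol' om p A B C D L = 0"
    "x2 L - sol'' om p A B C D L = 0" "x3 L - sol''' om p A B C D L = 0"
    unfolding centre unfolding A_def B_def C_def D_def using Q om p
    by (simp_all add: field_simps; simp add: Q_def algebra_simps power2_eq_square power3_eq_cube)+
  define v where "v t = x t - sol om p A B C D t" for t
  define v1 where "v1 t = x1 t - sol' om p A B C D t" for t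
  define v2 where "v2 t = x2 t - sol'' om p A B C D t" for t
  define v3 where "v3 t = x3 t - sol''' om p A B C D t" for t
  define v4 where "v4 t = x4 t - sol'''' om p A B C D t" for t
  have dv: "(v has_real_derivative v1 t) (at t within S)" "(v1 has_real_derivative v2 t) (at t within S)"
    "(v2 has_real_derivative v3 t) (at t within S)" "(v3 has_real_derivative v4 t) (at t within S)"
    if "t \<in> S" for t
    unfolding v_def[abs_def] v1_def[abs_def] v2_def[abs_def] v3_def[abs_def] v4_def
    using d0 d1 d2 d3 that
    by (auto intro!: derivative_intros sol_deriv sol'_deriv sol''_deriv sol'''_deriv)
  have veq: "v4 t - g\<^sup>2 * v2 t = om\<^sup>2 * p\<^sup>2 * v t" if "t \<in> S" for t
    unfolding v_def v2_def v4_def using eq that sol_ode[OF pe, of A B C D t] by (simp add: algebra_simps)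
  have "v t = 0 \<and> v1 t = 0 \<and> v2 t = 0" if "t \<in> S" for t
    by (rule fourth_order_ode_zero[OF S(1) om p pe dv veq S(2)[folded L_def] _ _ _ _ that])
      (use data in \<open>simp_all add: v_def v1_def v2_def v3_def\<close>)
  then show ?thesis
    unfolding v_def v1_def v2_def by (intro exI[of _ A] exI[of _ B] exI[of _ C] exI[of _ D]) simp
qed

lemma sol_at_ends:
  fixes om p A B C D :: real
  defines "c \<equiv> cos (om * (pi/2))" and "sn \<equiv> sin (om * (pi/2))"
    and "ch \<equiv> cosh (p * (pi/2))" and "sh \<equiv> sinh (p * (pi/2))"
  shows "sol om p A B C D pi = A * c + B * sn + C * ch + D * sh"
    "sol om p A B C D 0 = A * c - B * sn + C * ch - D * sh"
    "sol' om p A B C D pi = - A * om * sn + B * om * c + C * p * sh + D * p * ch"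
    "sol' om p A B C D 0 = A * om * sn + B * om * c - C * p * sh + D * p * ch"
    "sol'' om p A B C D pi = - A * om^2 * c - B * om^2 * sn + C * p^2 * ch + D * p^2 * sh"
    "sol'' om p A B C D 0 = - A * om^2 * c + B * om^2 * sn + C * p^2 * ch - D * p^2 * sh"
  by (simp_all add: sol_def sol'_def sol''_def c_def sn_def ch_def sh_def)

lemma sol_boundary_conditions_iff:
  fixes om p A B C D m :: real
  defines "c \<equiv> cos (om * (pi/2))" and "sn \<equiv> sin (om * (pi/2))"
    and "ch \<equiv> cosh (p * (pi/2))" and "sh \<equiv> sinh (p * (pi/2))"
  shows "(sol om p A B C D 0 = 0 \<and> sol om p A B C D pi = 0 \<and>
          m * sol'' om p A B C D 0 = sol' om p A B C D 0 \<and>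
          m * sol'' om p A B C D pi = - sol' om p A B C D pi) \<longleftrightarrow>
         (A * c + C * ch = 0 \<and> B * sn + D * sh = 0 \<and>
          A * (m * om^2 * c + om * sn) = C * (m * p^2 * ch + p * sh) \<and>
          B * (om * c - m * om^2 * sn) + D * (m * p^2 * sh + p * ch) = 0)"
  unfolding sol_at_ends c_def[symmetric] sn_def[symmetric] ch_def[symmetric] sh_def[symmetric]
  by (auto simp: algebra_simps)

lemma sinh_ge_self: fixes x :: real assumes "0 \<le> x" shows "x \<le> sinh x"
  using real_le_x_sinh[OF assms] by (simp add: sinh_field_def exp_minus)

lemma sinh_le_x_cosh: fixes z :: real assumes "0 \<le> z" shows "sinh z \<le> z * cosh z"
proof -
  have "(\<lambda>z. z * cosh z - sinh z) 0 \<le> (\<lambda>z. z * cosh z - sinh z) z"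
  proof (rule DERIV_nonneg_imp_nondecreasing[OF assms])
    fix x :: real assume x: "0 \<le> x" "x \<le> z"
    have "((\<lambda>z. z * cosh z - sinh z) has_real_derivative x * sinh x) (at x)"
      by (rule derivative_eq_intros refl | simp)+
    moreover have "x * sinh x \<ge> 0" using x by simp
    ultimately show "\<exists>y. ((\<lambda>z. z * cosh z - sinh z) has_real_derivative y) (at x) \<and> 0 \<le> y" by blast
  qed
  then show ?thesis by simp
qed

lemma x_coth_mono:
  fixes y1 y2 L :: real
  assumes L: "L > 0" and y1: "0 < y1" and y12: "y1 \<le> y2"
  shows "y1 * cosh (y1 * L) / sinh (y1 * L) \<le> y2 * cosh (y2 * L) / sinh (y2 * L)"
proof -
  let ?f = "\<lambda>y. y * cosh (y * L) / sinh (y * L)"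
  have "?f y1 \<le> ?f y2"
  proof (rule DERIV_nonneg_imp_nondecreasing[OF y12])
    fix x :: real assume x: "y1 \<le> x" "x \<le> y2"
    have xp: "x > 0" using x y1 by simp
    have sp: "sinh (x * L) > 0" using xp L by simp
    have "(?f has_real_derivative
        ((cosh (x * L) + x * (sinh (x * L) * L)) * sinh (x * L) - x * cosh (x * L) * (cosh (x * L) * L))
          / (sinh (x * L) * sinh (x * L))) (at x)"
      using sp by (auto intro!: derivative_eq_intros)
    moreover have "((cosh (x * L) + x * (sinh (x * L) * L)) * sinh (x * L) - x * cosh (x * L) * (cosh (x * L) * L))
          / (sinh (x * L) * sinh (x * L)) \<ge> 0"
    proof -
      have e: "(cosh (x * L) + x * (sinh (x * L) * L)) * sinh (x * L) - x * cosh (x * L) * (cosh (x * L) * L)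
          = cosh (x * L) * sinh (x * L) - x * L * ((cosh (x * L))^2 - (sinh (x * L))^2)"
        by (simp add: algebra_simps power2_eq_square)
      have "(cosh (x * L))^2 - (sinh (x * L))^2 = 1" by (simp add: cosh_square_eq)
      moreover have "x * L \<le> sinh (x * L)" using xp L by (intro sinh_ge_self) simp
      moreover have "sinh (x * L) \<le> cosh (x * L) * sinh (x * L)"
        using sp cosh_real_ge_1[of "x * L"] by (simp add: mult_le_cancel_right1)
      ultimately have "(cosh (x * L) + x * (sinh (x * L) * L)) * sinh (x * L) - x * cosh (x * L) * (cosh (x * L) * L) \<ge> 0"
        unfolding e by simp
      then show ?thesis by simp
    qed
    ultimately show "\<exists>y. (?f has_real_derivative y) (at x) \<and> 0 \<le> y" by blast
  qed
  then show ?thesis by simp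
qed

section \<open>The phase function\<close>

definition phase :: "(real \<Rightarrow> real) \<Rightarrow> real \<Rightarrow> real" where
  "phase N w = w * (pi/2) - arctan (w / N w)"

lemma phase_bounds:
  assumes "w > 0" "N w > 0"
  shows "(w - 1) * (pi/2) < phase N w" "phase N w < w * (pi/2)"
proof -
  have "w / N w > 0" using assms by simp
  then have "0 < arctan (w / N w)" "arctan (w / N w) < pi/2"
    using arctan_ubound by (auto simp: arctan_less_zero_iff)
  moreover have "(w - 1) * (pi/2) = w * (pi/2) - pi/2" by (simp add: field_simps)
  ultimately show "(w - 1) * (pi/2) < phase N w" "phase N w < w * (pi/2)"
    unfolding phase_def by linarith+
qed

lemma line_minus_arctan_strict_mono:
  fixes c w1 w2 :: real
  assumes c: "c > 0" and w1: "1 \<le> w1" and w12: "w1 < w2"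
  shows "w1 * (pi/2) - arctan (w1 / c) < w2 * (pi/2) - arctan (w2 / c)"
proof -
  let ?h = "\<lambda>w. w * (pi/2) - arctan (w / c)"
  have "?h w1 < ?h w2"
  proof (rule DERIV_pos_imp_increasing[OF w12])
    fix x :: real assume x: "w1 \<le> x" "x \<le> w2"
    have cne: "c \<noteq> 0" using c by simp
    have "(?h has_real_derivative pi/2 - (1 / c) / (1 + (x / c)^2)) (at x)"
      by (rule derivative_eq_intros refl | simp add: cne)+ (simp add: field_simps)
    moreover have "(1 / c) / (1 + (x / c)^2) < pi/2"
    proof -
      have x1: "x \<ge> 1" using x w1 by simp
      have "(1 / c) / (1 + (x / c)^2) = c / (c^2 + x^2)"
        using c by (simp add: field_simps power2_eq_square)
      also have "\<dots> \<le> 1 / 2"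
      proof -
        have "0 \<le> (c - x)^2" by simp
        then have "2 * c * x \<le> c^2 + x^2" by (simp add: power2_eq_square algebra_simps)
        then have "2 * c \<le> c^2 + x^2" using x1 c by (smt (verit) mult_le_cancel_left1)
        moreover have "c^2 + x^2 > 0" using c by (simp add: add_pos_nonneg)
        ultimately show ?thesis by (simp add: field_simps)
      qed
      also have "\<dots> < pi/2" using pi_gt3 by simp
      finally show ?thesis .
    qed
    ultimately show "\<exists>y. (?h has_real_derivative y) (at x) \<and> 0 < y"
      by (intro exI[of _ "pi/2 - (1 / c) / (1 + (x / c)^2)"]) simp
  qed
  then show ?thesis by simp
qed

lemma phase_strict_mono:
  assumes pos: "\<And>w. w > 0 \<Longrightarrow> N w > 0"
    and mono: "\<And>a b. 0 < a \<Longrightarrow> a \<le> b \<Longrightarrow> N a \<le> N b"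
    and w1: "1 \<le> w1" and w12: "w1 < w2"
  shows "phase N w1 < phase N w2"
proof -
  have N1: "N w1 > 0" using pos w1 by simp
  have "N w1 \<le> N w2" using mono w1 w12 by simp
  then have "w2 / N w2 \<le> w2 / N w1" using N1 w1 w12
    by (intro divide_left_mono) auto
  then have "arctan (w2 / N w2) \<le> arctan (w2 / N w1)" by (simp add: arctan_le_iff)
  moreover have "w1 * (pi/2) - arctan (w1 / N w1) < w2 * (pi/2) - arctan (w2 / N w1)"
    by (rule line_minus_arctan_strict_mono[OF N1 w1 w12])
  ultimately show ?thesis unfolding phase_def by simp
qed

lemma phase_root_exists:
  fixes k :: nat
  assumes pos: "\<And>w. w > 0 \<Longrightarrow> N w > 0"
    and cont: "\<And>a b. 0 < a \<Longrightarrow> continuous_on {a..b} N"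
    and k: "k \<ge> 1"
  shows "\<exists>w. real k < w \<and> w < real k + 1 \<and> phase N w = real k * (pi/2)"
proof -
  have kp: "real k > 0" using k by simp
  have nz: "\<forall>x\<in>{real k..real k + 1}. N x \<noteq> 0"
  proof
    fix x assume "x \<in> {real k..real k + 1}"
    then have "x > 0" using kp by simp
    then show "N x \<noteq> 0" using pos by (metis less_irrefl)
  qed
  have c: "continuous_on {real k..real k + 1} (phase N)"
    unfolding phase_def
    using cont[OF kp, of "real k + 1"] nz
    by (intro continuous_intros) auto
  have a: "phase N (real k) \<le> real k * (pi/2)" using phase_bounds[of "real k" N] kp pos[OF kp] by simp
  have b: "real k * (pi/2) \<le> phase N (real k + 1)" using phase_bounds[of "real k + 1" N] kp pos[of "real k + 1"] by simp
  obtain w where w: "real k \<le> w" "w \<le> real k + 1" "phase N w = real k * (pi/2)"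
    using IVT'[of "phase N" "real k" "real k * (pi/2)" "real k + 1", OF a b _ c] by auto
  have wp: "w > 0" using w kp by simp
  have "w \<noteq> real k" using phase_bounds(2)[of w N, OF wp pos[OF wp]] w by auto
  moreover have "w \<noteq> real k + 1" using phase_bounds(1)[of w N, OF wp pos[OF wp]] w by auto
  ultimately have "real k < w" "w < real k + 1" using w by auto
  then show ?thesis using w(3) by blast
qed

lemma phase_root_between:
  assumes "w > 0" "N w > 0" "phase N w = real k * (pi/2)"
  shows "real k < w" "w < real k + 1"
proof -
  have a: "(w - 1) * (pi/2) < real k * (pi/2)" "real k * (pi/2) < w * (pi/2)"
    using phase_bounds[of w N, OF assms(1) assms(2)] assms(3) by simp_all
  show "real k < w" using a(2) by (simp add: mult_less_cancel_right)
  show "w < real k + 1" using a(1) by (simp add: mult_less_cancel_right)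
qed

definition hfreq :: "real \<Rightarrow> real \<Rightarrow> real" where "hfreq g w = sqrt (w^2 + g^2)"

definition Neven :: "real \<Rightarrow> real \<Rightarrow> real \<Rightarrow> real" where
  "Neven m g w = m * (w^2 + (hfreq g w)^2) + hfreq g w * tanh (hfreq g w * (pi/2))"

definition Nodd :: "real \<Rightarrow> real \<Rightarrow> real \<Rightarrow> real" where
  "Nodd m g w = m * (w^2 + (hfreq g w)^2) + hfreq g w * cosh (hfreq g w * (pi/2)) / sinh (hfreq g w * (pi/2))"

definition Npar :: "real \<Rightarrow> real \<Rightarrow> nat \<Rightarrow> real \<Rightarrow> real" where
  "Npar m g k = (if odd k then Neven m g else Nodd m g)"

text \<open>For odd \<open>k\<close> the \<open>k\<close>-th eigenfunction is even about \<open>\<pi>/2\<close> and \<open>Neven\<close> applies, for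
  even \<open>k\<close> it is odd and \<open>Nodd\<close> applies.\<close>
definition freq :: "real \<Rightarrow> real \<Rightarrow> nat \<Rightarrow> real" where
  "freq m g k = (THE w. real k < w \<and> w < real k + 1 \<and> phase (Npar m g k) w = real k * (pi/2))"

lemma hfreq_facts:
  assumes g: "g > 0"
  shows "hfreq g w > 0" "(hfreq g w)^2 = w^2 + g^2" "w \<le> hfreq g w" "hfreq g w \<le> \<bar>w\<bar> + g"
proof -
  have s: "w^2 + g^2 > 0" using g by (simp add: add_nonneg_pos)
  show "hfreq g w > 0" unfolding hfreq_def using s by simp
  show "(hfreq g w)^2 = w^2 + g^2" unfolding hfreq_def using s by simp
  show "w \<le> hfreq g w" unfolding hfreq_def by (simp add: real_le_rsqrt)
  have "w^2 + g^2 \<le> (\<bar>w\<bar> + g)^2" using g by (simp add: power2_eq_square algebra_simps)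
  then have "sqrt (w^2 + g^2) \<le> sqrt ((\<bar>w\<bar> + g)^2)" by (rule real_sqrt_le_mono)
  then show "hfreq g w \<le> \<bar>w\<bar> + g" unfolding hfreq_def using g by simp
qed

lemma hfreq_mono: assumes "0 \<le> a" "a \<le> b" shows "hfreq g a \<le> hfreq g b"
  unfolding hfreq_def using assms by (intro real_sqrt_le_mono) (simp add: power_mono)

lemma Neven_ge:
  assumes m: "m > 0" and g: "g > 0" and w: "w > 0"
  shows "Neven m g w \<ge> m * (w^2 + (hfreq g w)^2)" "Neven m g w > 0"
proof -
  have "hfreq g w * tanh (hfreq g w * (pi/2)) \<ge> 0" using hfreq_facts(1)[OF g, of w] by simp
  then show "Neven m g w \<ge> m * (w^2 + (hfreq g w)^2)" unfolding Neven_def by simp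
  moreover have "m * (w^2 + (hfreq g w)^2) > 0" using m w by (simp add: add_pos_nonneg)
  ultimately show "Neven m g w > 0" by simp
qed

lemma Nodd_ge:
  assumes m: "m > 0" and g: "g > 0" and w: "w > 0"
  shows "Nodd m g w \<ge> m * (w^2 + (hfreq g w)^2)" "Nodd m g w > 0" "Nodd m g w * (pi/2) > 1"
proof -
  have pp: "hfreq g w > 0" using hfreq_facts(1)[OF g] by simp
  have z: "hfreq g w * (pi/2) > 0" using pp by simp
  have h: "hfreq g w * cosh (hfreq g w * (pi/2)) / sinh (hfreq g w * (pi/2)) * (pi/2) \<ge> 1"
  proof -
    have "sinh (hfreq g w * (pi/2)) \<le> hfreq g w * (pi/2) * cosh (hfreq g w * (pi/2))"
      using z by (intro sinh_le_x_cosh) simp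
    moreover have "sinh (hfreq g w * (pi/2)) > 0" using z by simp
    ultimately show ?thesis by (simp add: field_simps)
  qed
  have "hfreq g w * cosh (hfreq g w * (pi/2)) / sinh (hfreq g w * (pi/2)) \<ge> 0"
    using pp z by (simp add: less_imp_le)
  then show "Nodd m g w \<ge> m * (w^2 + (hfreq g w)^2)" unfolding Nodd_def by simp
  moreover have mp: "m * (w^2 + (hfreq g w)^2) > 0" using m w by (simp add: add_pos_nonneg)
  ultimately show "Nodd m g w > 0" by simp
  show "Nodd m g w * (pi/2) > 1"
  proof -
    have e: "Nodd m g w * (pi/2) = m * (w^2 + (hfreq g w)^2) * (pi/2) + hfreq g w * cosh (hfreq g w * (pi/2)) / sinh (hfreq g w * (pi/2)) * (pi/2)"
      unfolding Nodd_def by (simp add: distrib_right)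
    have "m * (w^2 + (hfreq g w)^2) * (pi/2) > 0" using mp by simp
    then show ?thesis using e h by linarith
  qed
qed

lemma Neven_mono:
  assumes m: "m > 0" and g: "g > 0" and a: "0 < a" and ab: "a \<le> b"
  shows "Neven m g a \<le> Neven m g b"
proof -
  have p: "hfreq g a \<le> hfreq g b" using hfreq_mono a ab by simp
  have pa: "hfreq g a > 0" using hfreq_facts(1)[OF g] by simp
  have "m * (a^2 + (hfreq g a)^2) \<le> m * (b^2 + (hfreq g b)^2)"
    using m a ab p pa by (intro mult_left_mono add_mono power_mono) auto
  moreover have "hfreq g a * tanh (hfreq g a * (pi/2)) \<le> hfreq g b * tanh (hfreq g b * (pi/2))"
    using p pa by (intro mult_mono) (auto simp: less_imp_le)
  ultimately show ?thesis unfolding Neven_def by simp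
qed

lemma Nodd_mono:
  assumes m: "m > 0" and g: "g > 0" and a: "0 < a" and ab: "a \<le> b"
  shows "Nodd m g a \<le> Nodd m g b"
proof -
  have p: "hfreq g a \<le> hfreq g b" using hfreq_mono a ab by simp
  have pa: "hfreq g a > 0" using hfreq_facts(1)[OF g] by simp
  have "m * (a^2 + (hfreq g a)^2) \<le> m * (b^2 + (hfreq g b)^2)"
    using m a ab p pa by (intro mult_left_mono add_mono power_mono) auto
  moreover have "hfreq g a * cosh (hfreq g a * (pi/2)) / sinh (hfreq g a * (pi/2)) \<le> hfreq g b * cosh (hfreq g b * (pi/2)) / sinh (hfreq g b * (pi/2))"
    using x_coth_mono[of "pi/2" "hfreq g a" "hfreq g b"] p pa by simp
  ultimately show ?thesis unfolding Nodd_def by (simp add: add_mono)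
qed

lemma continuous_on_Neven: assumes g: "g > 0" shows "continuous_on S (Neven m g)"
proof -
  have "continuous_on S (hfreq g)" unfolding hfreq_def[abs_def] by (intro continuous_intros)
  moreover have "\<forall>x\<in>S. cosh (hfreq g x * (pi/2)) \<noteq> 0" by (simp add: cosh_real_pos[THEN less_imp_neq, symmetric])
  ultimately have "continuous_on S (\<lambda>w. m * (w^2 + (hfreq g w)^2) + hfreq g w * (sinh (hfreq g w * (pi/2)) / cosh (hfreq g w * (pi/2))))"
    by (intro continuous_intros continuous_on_divide) auto
  moreover have "(\<lambda>w. m * (w^2 + (hfreq g w)^2) + hfreq g w * (sinh (hfreq g w * (pi/2)) / cosh (hfreq g w * (pi/2)))) = Neven m g"
    by (auto simp: Neven_def tanh_def)
  ultimately show ?thesis by metis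
qed

lemma continuous_on_Nodd: assumes g: "g > 0" shows "continuous_on S (Nodd m g)"
proof -
  have "continuous_on S (hfreq g)" unfolding hfreq_def[abs_def] by (intro continuous_intros)
  moreover have "\<forall>x\<in>S. sinh (hfreq g x * (pi/2)) \<noteq> 0"
  proof
    fix x have "hfreq g x > 0" using hfreq_facts(1)[OF g] by simp
    then show "sinh (hfreq g x * (pi/2)) \<noteq> 0" by simp
  qed
  ultimately have "continuous_on S (\<lambda>w. m * (w^2 + (hfreq g w)^2) + hfreq g w * cosh (hfreq g w * (pi/2)) / sinh (hfreq g w * (pi/2)))"
    by (intro continuous_intros continuous_on_divide) auto
  moreover have "(\<lambda>w. m * (w^2 + (hfreq g w)^2) + hfreq g w * cosh (hfreq g w * (pi/2)) / sinh (hfreq g w * (pi/2))) = Nodd m g"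
    by (auto simp: Nodd_def)
  ultimately show ?thesis by metis
qed

lemma Npar_facts:
  assumes m: "m > 0" and g: "g > 0"
  shows "\<And>w. w > 0 \<Longrightarrow> Npar m g k w > 0"
    "\<And>a b. 0 < a \<Longrightarrow> a \<le> b \<Longrightarrow> Npar m g k a \<le> Npar m g k b"
    "\<And>a b. 0 < a \<Longrightarrow> continuous_on {a..b} (Npar m g k)"
    "\<And>w. w > 0 \<Longrightarrow> Npar m g k w \<ge> m * (w^2 + (hfreq g w)^2)"
  using Neven_ge[OF m g] Nodd_ge[OF m g] Neven_mono[OF m g] Nodd_mono[OF m g] continuous_on_Neven[OF g] continuous_on_Nodd[OF g]
  unfolding Npar_def by auto

lemma freq_spec:
  assumes m: "m > 0" and g: "g > 0" and k: "k \<ge> 1"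
  shows "real k < freq m g k \<and> freq m g k < real k + 1 \<and> phase (Npar m g k) (freq m g k) = real k * (pi/2)"
proof -
  note F = Npar_facts[OF m g, where k=k]
  obtain w where w: "real k < w \<and> w < real k + 1 \<and> phase (Npar m g k) w = real k * (pi/2)"
    using phase_root_exists[of "Npar m g k" k, OF F(1) F(3) k] by blast
  show ?thesis unfolding freq_def
  proof (rule theI[of _ w])
    show "real k < w \<and> w < real k + 1 \<and> phase (Npar m g k) w = real k * (pi/2)" by (rule w)
    fix y assume y: "real k < y \<and> y < real k + 1 \<and> phase (Npar m g k) y = real k * (pi/2)"
    have y1: "1 \<le> y" "1 \<le> w" using y w k by auto
    show "y = w"
    proof (rule ccontr)
      assume "y \<noteq> w"
      then consider "y < w" | "w < y" by linarith
      then show False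
      proof cases
        case 1 then show False using phase_strict_mono[of "Npar m g k" y w, OF F(1) F(2) y1(1)] y w by auto
      next
        case 2 then show False using phase_strict_mono[of "Npar m g k" w y, OF F(1) F(2) y1(2)] y w by auto
      qed
    qed
  qed
qed

lemma freq_unique:
  assumes m: "m > 0" and g: "g > 0" and k: "k \<ge> 1" and w: "w > 0"
    and r: "phase (Npar m g k) w = real k * (pi/2)"
  shows "w = freq m g k"
proof -
  note F = Npar_facts[OF m g, where k=k]
  have wi: "real k < w" "w < real k + 1" using phase_root_between[OF w F(1)[OF w] r] by auto
  note o = freq_spec[OF m g k]
  have y1: "1 \<le> w" "1 \<le> freq m g k" using wi o k by auto
  show ?thesis
  proof (rule ccontr)
    assume "w \<noteq> freq m g k"
    then consider "w < freq m g k" | "freq m g k < w" by linarith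
    then show False
    proof cases
      case 1 then show False using phase_strict_mono[of "Npar m g k", OF F(1) F(2) y1(1) 1] r o by auto
    next
      case 2 then show False using phase_strict_mono[of "Npar m g k", OF F(1) F(2) y1(2) 2] r o by auto
    qed
  qed
qed

text \<open>A solution even (odd) about \<open>\<pi>/2\<close> satisfies the boundary conditions iff \<open>char_even\<close>
  (\<open>char_odd\<close>) vanishes; by \<open>cos_sin_phase\<close> these are positive multiples of the cosine
  (sine) of the phase.\<close>

definition char_even :: "real \<Rightarrow> real \<Rightarrow> real \<Rightarrow> real" where
  "char_even m g w = cos (w * (pi/2)) * Neven m g w + w * sin (w * (pi/2))"

definition char_odd :: "real \<Rightarrow> real \<Rightarrow> real \<Rightarrow> real" where
  "char_odd m g w = sin (w * (pi/2)) * Nodd m g w - w * cos (w * (pi/2))"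

lemma cos_sin_phase:
  assumes n: "N w > 0"
  shows "cos (phase N w) * N w = cos (arctan (w / N w)) * (cos (w * (pi/2)) * N w + w * sin (w * (pi/2)))"
    "sin (phase N w) * N w = cos (arctan (w / N w)) * (sin (w * (pi/2)) * N w - w * cos (w * (pi/2)))"
proof -
  define a where "a = arctan (w / N w)"
  define C where "C = cos a"
  define c where "c = cos (w * (pi/2))"
  define s where "s = sin (w * (pi/2))"
  have sa: "sin a = (w / N w) * C"
    unfolding a_def C_def by (simp add: sin_arctan cos_arctan)
  have e1: "cos (phase N w) = c * C + s * sin a" unfolding phase_def a_def[symmetric] C_def c_def s_def
    by (simp add: cos_diff)
  have e2: "sin (phase N w) = s * C - c * sin a" unfolding phase_def a_def[symmetric] C_def c_def s_def
    by (simp add: sin_diff)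
  have nz: "N w \<noteq> 0" using n by simp
  show "cos (phase N w) * N w = cos (arctan (w / N w)) * (cos (w * (pi/2)) * N w + w * sin (w * (pi/2)))"
    unfolding e1 sa a_def[symmetric] C_def[symmetric] c_def[symmetric] s_def[symmetric]
    using nz by (simp add: algebra_simps)
  show "sin (phase N w) * N w = cos (arctan (w / N w)) * (sin (w * (pi/2)) * N w - w * cos (w * (pi/2)))"
    unfolding e2 sa a_def[symmetric] C_def[symmetric] c_def[symmetric] s_def[symmetric]
    using nz by (simp add: algebra_simps)
qed

lemma cos_arctan_pos: "cos (arctan x) > 0"
  by (simp add: cos_arctan add_pos_nonneg)

lemma freq_inj:
  assumes m: "m > 0" and g: "g > 0" and k: "k \<ge> 1" and j: "j \<ge> 1" and e: "freq m g k = freq m g j"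
  shows "k = j"
proof -
  have a: "real k < freq m g k" "freq m g k < real k + 1" using freq_spec[OF m g k] by auto
  have b: "real j < freq m g j" "freq m g j < real j + 1" using freq_spec[OF m g j] by auto
  have "real k < real j + 1" "real j < real k + 1" using a b e by linarith+
  then show ?thesis by linarith
qed

lemma char_even_zero_iff:
  assumes m: "m > 0" and g: "g > 0" and w: "w > 0"
  shows "char_even m g w = 0 \<longleftrightarrow> (\<exists>k. k \<ge> 1 \<and> odd k \<and> w = freq m g k)"
proof
  have N: "Neven m g w > 0" using Neven_ge[OF m g w] by simp
  assume "char_even m g w = 0"
  then have "cos (phase (Neven m g) w) * Neven m g w = 0"
    using cos_sin_phase(1)[of "Neven m g" w, OF N] unfolding char_even_def by simp
  then have "cos (phase (Neven m g) w) = 0" using N by simp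
  then obtain i :: int where i: "odd i" "phase (Neven m g) w = of_int i * (pi/2)"
    by (auto simp: cos_zero_iff_int)
  have "(w - 1) * (pi/2) < of_int i * (pi/2)" using phase_bounds(1)[of w "Neven m g", OF w N] i by simp
  then have "w - 1 < of_int i" by (simp add: mult_less_cancel_right)
  then have "of_int i > (-1::real)" using w by linarith
  then have "i > -1" by linarith
  then have i0: "i \<ge> 0" by simp
  define k where "k = nat i"
  have ki: "of_int i = real k" unfolding k_def using i0 by simp
  have ko: "odd k" unfolding k_def using i(1) i0 by (simp add: even_nat_iff)
  then have k1: "k \<ge> 1" by (cases k) auto
  have "phase (Npar m g k) w = real k * (pi/2)" using i(2) ki ko unfolding Npar_def by simp
  then have "w = freq m g k" by (rule freq_unique[OF m g k1 w])
  then show "\<exists>k. k \<ge> 1 \<and> odd k \<and> w = freq m g k" using k1 ko by blast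
next
  have N: "Neven m g w > 0" using Neven_ge[OF m g w] by simp
  assume "\<exists>k. k \<ge> 1 \<and> odd k \<and> w = freq m g k"
  then obtain k where k: "k \<ge> 1" "odd k" "w = freq m g k" by blast
  have "phase (Neven m g) w = real k * (pi/2)" using freq_spec[OF m g k(1)] k unfolding Npar_def by simp
  moreover have "cos (real k * (pi/2)) = 0" unfolding cos_zero_iff_int
  proof (intro exI conjI)
    show "odd (int k)" using k(2) by simp
    show "real k * (pi/2) = real_of_int (int k) * (pi/2)" by simp
  qed
  ultimately have "cos (phase (Neven m g) w) = 0" by metis
  then show "char_even m g w = 0"
    using cos_sin_phase(1)[of "Neven m g" w, OF N] cos_arctan_pos[of "w / Neven m g w"] unfolding char_even_def by simp
qed

lemma phase_Nodd_pos:
  assumes m: "m > 0" and g: "g > 0" and w: "w > 0"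
  shows "phase (Nodd m g) w > 0"
proof -
  have N: "Nodd m g w > 0" "Nodd m g w * (pi/2) > 1" using Nodd_ge[OF m g w] by auto
  have "arctan (w / Nodd m g w) \<le> w / Nodd m g w" using N w by (intro arctan_le_self) simp
  also have "w / Nodd m g w < w * (pi/2)"
  proof -
    have "w * 1 < w * (Nodd m g w * (pi/2))" using N w by (intro mult_strict_left_mono) auto
    then show ?thesis using N by (simp add: pos_divide_less_eq algebra_simps)
  qed
  finally show ?thesis unfolding phase_def by simp
qed

lemma char_odd_zero_iff:
  assumes m: "m > 0" and g: "g > 0" and w: "w > 0"
  shows "char_odd m g w = 0 \<longleftrightarrow> (\<exists>k. k \<ge> 1 \<and> even k \<and> w = freq m g k)"
proof
  have N: "Nodd m g w > 0" using Nodd_ge[OF m g w] by simp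
  assume "char_odd m g w = 0"
  then have "sin (phase (Nodd m g) w) * Nodd m g w = 0"
    using cos_sin_phase(2)[of "Nodd m g" w, OF N] unfolding char_odd_def by simp
  then have "sin (phase (Nodd m g) w) = 0" using N by simp
  then obtain i :: int where i: "even i" "phase (Nodd m g) w = of_int i * (pi/2)"
    by (auto simp: sin_zero_iff_int)
  have "0 < of_int i * (pi/2)" using phase_Nodd_pos[OF m g w] i by simp
  then have i0: "i > 0" by (simp add: zero_less_mult_iff)
  define k where "k = nat i"
  have ki: "of_int i = real k" unfolding k_def using i0 by simp
  have ko: "even k" unfolding k_def using i(1) i0 by (simp add: even_nat_iff)
  have k1: "k \<ge> 1" unfolding k_def using i0 by simp
  have "phase (Npar m g k) w = real k * (pi/2)" using i(2) ki ko unfolding Npar_def by simp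
  then have "w = freq m g k" by (rule freq_unique[OF m g k1 w])
  then show "\<exists>k. k \<ge> 1 \<and> even k \<and> w = freq m g k" using k1 ko by blast
next
  have N: "Nodd m g w > 0" using Nodd_ge[OF m g w] by simp
  assume "\<exists>k. k \<ge> 1 \<and> even k \<and> w = freq m g k"
  then obtain k where k: "k \<ge> 1" "even k" "w = freq m g k" by blast
  have "phase (Nodd m g) w = real k * (pi/2)" using freq_spec[OF m g k(1)] k unfolding Npar_def by simp
  moreover have "sin (real k * (pi/2)) = 0" unfolding sin_zero_iff_int
  proof (intro exI conjI)
    show "even (int k)" using k(2) by simp
    show "real k * (pi/2) = real_of_int (int k) * (pi/2)" by simp
  qed
  ultimately have "sin (phase (Nodd m g) w) = 0" by metis
  then show "char_odd m g w = 0"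
    using cos_sin_phase(2)[of "Nodd m g" w, OF N] cos_arctan_pos[of "w / Nodd m g w"] unfolding char_odd_def by simp
qed

lemma char_at_freq_nonzero:
  assumes m: "m > 0" and g: "g > 0" and k: "k \<ge> 1"
  shows "odd k \<Longrightarrow> char_odd m g (freq m g k) \<noteq> 0"
    and "even k \<Longrightarrow> char_even m g (freq m g k) \<noteq> 0"
proof -
  have w: "freq m g k > 0" using freq_spec[OF m g k] by simp
  show "char_odd m g (freq m g k) \<noteq> 0" if "odd k"
    using char_odd_zero_iff[OF m g w] freq_inj[OF m g k] that by fastforce
  show "char_even m g (freq m g k) \<noteq> 0" if "even k"
    using char_even_zero_iff[OF m g w] freq_inj[OF m g k] that by fastforce
qed

lemma lin_indep_nonzero:
  assumes li: "lin_indep_on {0..pi} F" and f: "f \<in> F" and fin: "finite F"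
  shows "\<exists>t\<in>{0..pi}. f t \<noteq> 0"
proof (rule ccontr)
  assume "\<not> (\<exists>t\<in>{0..pi}. f t \<noteq> 0)"
  then have z: "\<forall>t\<in>{0..pi}. f t = 0" by simp
  define c where "c h = (if h = f then (1::real) else 0)" for h :: "real \<Rightarrow> real"
  have "\<forall>t\<in>{0..pi}. (\<Sum>h\<in>F. c h * h t) = 0"
  proof
    fix t assume t: "t \<in> {0..pi}"
    have "(\<Sum>h\<in>F. c h * h t) = (\<Sum>h\<in>F. if h = f then f t else 0)"
      unfolding c_def by (intro sum.cong) auto
    also have "\<dots> = f t" using f fin by (simp add: sum.delta')
    finally show "(\<Sum>h\<in>F. c h * h t) = 0" using z t by simp
  qed
  then have "c f = 0" using li f unfolding lin_indep_on_def by blast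
  then show False unfolding c_def by simp
qed

lemma eig_mult_zero:
  assumes "\<And>x. in_eigenspace T g mu x \<Longrightarrow> \<forall>t\<in>{0..pi}. x t = 0"
  shows "eig_mult T g mu = 0"
proof -
  let ?X = "{card F | F. finite F \<and> (\<forall>x\<in>F. in_eigenspace T g mu x) \<and> lin_indep_on {0..pi} F}"
  have "\<forall>n\<in>?X. n \<le> 0"
  proof
    fix n assume "n \<in> ?X"
    then obtain F where F: "n = card F" "finite F" "\<forall>x\<in>F. in_eigenspace T g mu x" "lin_indep_on {0..pi} F" by blast
    have "F = {}"
    proof (rule ccontr)
      assume "F \<noteq> {}"
      then obtain f where f: "f \<in> F" by blast
      then show False using lin_indep_nonzero[OF F(4) f F(2)] assms F(3) by blast
    qed
    then show "n \<le> 0" using F by simp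
  qed
  moreover have "0 \<in> ?X"
    by (rule CollectI, rule exI[of _ "{}"]) (simp add: lin_indep_on_def)
  ultimately have "Sup ?X = 0" by (intro cSup_eq_maximum) auto
  then show ?thesis unfolding eig_mult_def by simp
qed

lemma eig_mult_one:
  assumes span: "\<And>x. in_eigenspace T g mu x \<Longrightarrow> \<exists>a. \<forall>t\<in>{0..pi}. x t = a * e t"
    and ee: "in_eigenspace T g mu e" and nz: "t0 \<in> {0..pi}" "e t0 \<noteq> 0"
  shows "eig_mult T g mu = 1"
proof -
  let ?X = "{card F | F. finite F \<and> (\<forall>x\<in>F. in_eigenspace T g mu x) \<and> lin_indep_on {0..pi} F}"
  have "\<forall>n\<in>?X. n \<le> 1"
  proof
    fix n assume "n \<in> ?X"
    then obtain F where F: "n = card F" "finite F" "\<forall>x\<in>F. in_eigenspace T g mu x" "lin_indep_on {0..pi} F" by blast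
    show "n \<le> 1"
    proof (rule ccontr)
      assume "\<not> n \<le> 1"
      then have "card F \<ge> 2" using F by simp
      then obtain f1 f2 where f12: "f1 \<in> F" "f2 \<in> F" "f1 \<noteq> f2"
        using card_le_Suc0_iff_eq[OF F(2)] by fastforce
      obtain a1 where a1: "\<forall>t\<in>{0..pi}. f1 t = a1 * e t" using span F(3) f12 by blast
      obtain a2 where a2: "\<forall>t\<in>{0..pi}. f2 t = a2 * e t" using span F(3) f12 by blast
      define c where "c h = (if h = f1 then a2 else if h = f2 then - a1 else 0)" for h :: "real \<Rightarrow> real"
      have "\<forall>t\<in>{0..pi}. (\<Sum>h\<in>F. c h * h t) = 0"
      proof
        fix t assume t: "t \<in> {0..pi}"
        have "(\<Sum>h\<in>F. c h * h t) = (\<Sum>h\<in>F. (if h = f1 then a2 * f1 t else 0) + (if h = f2 then - a1 * f2 t else 0))"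
          unfolding c_def using f12 by (intro sum.cong) auto
        also have "\<dots> = a2 * f1 t - a1 * f2 t" using f12 F(2) by (simp add: sum.distrib sum.delta')
        also have "\<dots> = 0" using a1 a2 t by simp
        finally show "(\<Sum>h\<in>F. c h * h t) = 0" .
      qed
      then have "c f1 = 0" "c f2 = 0" using F(4) f12 unfolding lin_indep_on_def by blast+
      then have "a1 = 0" using f12 unfolding c_def by simp
      then have "\<forall>t\<in>{0..pi}. f1 t = 0" using a1 by simp
      then show False using lin_indep_nonzero[OF F(4) f12(1) F(2)] by blast
    qed
  qed
  moreover have "1 \<in> ?X"
  proof (rule CollectI, rule exI[of _ "{e}"], intro conjI)
    show "lin_indep_on {0..pi} {e}" unfolding lin_indep_on_def using nz by auto
  qed (use ee in auto)
  ultimately have "Sup ?X = 1" by (intro cSup_eq_maximum) auto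
  then show ?thesis unfolding eig_mult_def by simp
qed

section \<open>Nonpositive spectral parameters\<close>

lemma nonneg_has_integral_nonpos_imp_zero:
  fixes h :: "real \<Rightarrow> real"
  assumes ab: "a < b" and h: "continuous_on {a..b} h" "\<And>t. t \<in> {a..b} \<Longrightarrow> 0 \<le> h t"
    and I: "(h has_integral I) {a..b}" "I \<le> 0" and t: "t \<in> {a..b}"
  shows "h t = 0"
proof -
  have "I = 0" using has_integral_nonneg[OF I(1) h(2)] I(2) by simp
  then show ?thesis
    using has_integral_0_cbox_imp_0[of a b h t] h I(1) ab t by auto
qed

text \<open>Multiply the equation by \<open>x\<close> and integrate by parts twice.\<close>
lemma eigenspace_energy_identity:
  fixes x x1 x2 x3 x4 :: "real \<Rightarrow> real"
  assumes m: "m > 0"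
    and d0: "\<forall>t\<in>{0..pi}. (x has_real_derivative x1 t) (at t within {0..pi})"
    and d1: "\<forall>t\<in>{0..pi}. (x1 has_real_derivative x2 t) (at t within {0..pi})"
    and d2: "\<forall>t\<in>{0..pi}. (x2 has_real_derivative x3 t) (at t within {0..pi})"
    and d3: "\<forall>t\<in>{0..pi}. (x3 has_real_derivative x4 t) (at t within {0..pi})"
    and eq: "\<forall>t\<in>{0..pi}. x4 t - g\<^sup>2 * x2 t = mu * x t"
    and bc: "x 0 = 0" "x pi = 0" "m * x2 0 = x1 0" "m * x2 pi = - x1 pi"
  shows "((\<lambda>t. (x2 t)\<^sup>2 + g\<^sup>2 * (x1 t)\<^sup>2 - mu * (x t)\<^sup>2)
           has_integral - ((x1 0)\<^sup>2 + (x1 pi)\<^sup>2) / m) {0..pi}"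
proof -
  define F where "F t = x3 t * x t - x2 t * x1 t - g\<^sup>2 * x1 t * x t" for t
  have dF: "(F has_real_derivative mu * (x t)\<^sup>2 - (x2 t)\<^sup>2 - g\<^sup>2 * (x1 t)\<^sup>2) (at t within {0..pi})"
    if t: "t \<in> {0..pi}" for t
  proof -
    have "(F has_real_derivative (x4 t * x t + x3 t * x1 t) - (x3 t * x1 t + x2 t * x2 t)
          - g\<^sup>2 * (x2 t * x t + x1 t * x1 t)) (at t within {0..pi})"
      unfolding F_def[abs_def]
      by (rule derivative_eq_intros d0[rule_format, OF t] d1[rule_format, OF t] d2[rule_format, OF t]
          d3[rule_format, OF t] refl | simp add: algebra_simps)+
    moreover have "x4 t = g\<^sup>2 * x2 t + mu * x t" using eq t by (simp add: algebra_simps)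
    ultimately show ?thesis by (simp add: algebra_simps power2_eq_square)
  qed
  have "((\<lambda>t. mu * (x t)\<^sup>2 - (x2 t)\<^sup>2 - g\<^sup>2 * (x1 t)\<^sup>2) has_integral F pi - F 0) {0..pi}"
    using dF pi_gt_zero
    by (intro fundamental_theorem_of_calculus)
      (auto simp: has_real_derivative_iff_has_vector_derivative[symmetric])
  from has_integral_neg[OF this]
  have "((\<lambda>t. (x2 t)\<^sup>2 + g\<^sup>2 * (x1 t)\<^sup>2 - mu * (x t)\<^sup>2) has_integral F 0 - F pi) {0..pi}"
    by (simp add: algebra_simps)
  moreover have "x2 0 = x1 0 / m" "x2 pi = - x1 pi / m" using bc m by (simp_all add: field_simps)
  then have "F 0 - F pi = - ((x1 0)\<^sup>2 + (x1 pi)\<^sup>2) / m"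
    unfolding F_def using bc by (simp add: diff_divide_distrib add_divide_distrib power2_eq_square)
  ultimately show ?thesis by simp
qed

lemma eigenspace_nonpos_trivial:
  assumes g: "g > 0" and m: "m > 0" and Tm: "T / (pi * g) = m"
    and ins: "in_eigenspace T g mu x" and mu: "mu \<le> 0"
  shows "\<forall>t\<in>{0..pi}. x t = 0"
proof -
  obtain x1 x2 x3 x4 where
    d0: "\<forall>t\<in>{0..pi}. (x has_real_derivative x1 t) (at t within {0..pi})" and
    d1: "\<forall>t\<in>{0..pi}. (x1 has_real_derivative x2 t) (at t within {0..pi})" and
    d2: "\<forall>t\<in>{0..pi}. (x2 has_real_derivative x3 t) (at t within {0..pi})" and
    d3: "\<forall>t\<in>{0..pi}. (x3 has_real_derivative x4 t) (at t within {0..pi})" and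
    eq: "\<forall>t\<in>{0..pi}. x4 t - g\<^sup>2 * x2 t = mu * x t" and
    bc: "x 0 = 0" "x pi = 0" "m * x2 0 = x1 0" "m * x2 pi = - x1 pi"
    using ins Tm unfolding in_eigenspace_def by blast
  define h where "h t = (x2 t)\<^sup>2 + g\<^sup>2 * (x1 t)\<^sup>2 - mu * (x t)\<^sup>2" for t
  have parts: "0 \<le> (x2 t)\<^sup>2" "0 \<le> g\<^sup>2 * (x1 t)\<^sup>2" "mu * (x t)\<^sup>2 \<le> 0" for t
    using mu by (simp_all add: mult_nonpos_nonneg)
  then have h_nonneg: "0 \<le> h t" for t unfolding h_def by (smt (verit))
  have "continuous_on {0..pi} h"
    unfolding h_def[abs_def] using d0 d1 d2
    by (intro continuous_intros; intro DERIV_continuous_on) auto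
  moreover have "(h has_integral - ((x1 0)\<^sup>2 + (x1 pi)\<^sup>2) / m) {0..pi}"
    unfolding h_def[abs_def] by (rule eigenspace_energy_identity[OF m d0 d1 d2 d3 eq bc])
  moreover have "- ((x1 0)\<^sup>2 + (x1 pi)\<^sup>2) / m \<le> 0" using m by (simp add: divide_nonpos_pos)
  ultimately have h0: "h t = 0" if "t \<in> {0..pi}" for t
    using nonneg_has_integral_nonpos_imp_zero[OF pi_gt_zero] h_nonneg that by blast
  have "x1 t = 0" if "t \<in> {0..pi}" for t
  proof -
    have "g\<^sup>2 * (x1 t)\<^sup>2 = 0" using h0[OF that] parts[of t] unfolding h_def by linarith
    then show ?thesis using g by simp
  qed
  then obtain K where K: "\<forall>t\<in>{0..pi}. x t = K"
    using has_field_derivative_zero_constant[of "{0..pi}" x] d0 by fastforce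
  then show ?thesis using bc(1) by auto
qed

lemma even_bc_iff:
  fixes A C c sn ch sh m w p :: real
  assumes ch: "ch > 0" and C: "C = - A * c / ch"
  shows "A * (m * w^2 * c + w * sn) = C * (m * p^2 * ch + p * sh) \<longleftrightarrow>
         A * (c * (m * (w^2 + p^2) + p * (sh / ch)) + w * sn) = 0"
  using ch unfolding C by (simp add: field_simps) (rule iffI; linarith)

lemma odd_bc_iff:
  fixes B D c sn ch sh m w p :: real
  assumes sh: "sh > 0" and D: "D = - B * sn / sh"
  shows "B * (w * c - m * w^2 * sn) + D * (m * p^2 * sh + p * ch) = 0 \<longleftrightarrow>
         B * (sn * (m * (w^2 + p^2) + p * ch / sh) - w * c) = 0"
  using sh unfolding D by (simp add: field_simps) (rule iffI; linarith)

lemma char_even_unfold: "char_even m g w = cos (w * (pi/2)) * (m * (w^2 + (hfreq g w)^2) + hfreq g w * (sinh (hfreq g w * (pi/2)) / cosh (hfreq g w * (pi/2)))) + w * sin (w * (pi/2))"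
  unfolding char_even_def Neven_def tanh_def by simp

lemma char_odd_unfold: "char_odd m g w = sin (w * (pi/2)) * (m * (w^2 + (hfreq g w)^2) + hfreq g w * cosh (hfreq g w * (pi/2)) / sinh (hfreq g w * (pi/2))) - w * cos (w * (pi/2))"
  unfolding char_odd_def Nodd_def by simp

lemma eigenspace_sol_rep:
  assumes g: "g > 0" and m: "m > 0" and Tm: "T / (pi * g) = m" and w: "w > 0"
    and ins: "in_eigenspace T g (w^2 * (hfreq g w)^2) x"
  shows "\<exists>A B C D. (\<forall>t\<in>{0..pi}. x t = sol w (hfreq g w) A B C D t)
     \<and> A * char_even m g w = 0 \<and> C = - A * cos (w * (pi/2)) / cosh (hfreq g w * (pi/2))
     \<and> B * char_odd m g w = 0 \<and> D = - B * sin (w * (pi/2)) / sinh (hfreq g w * (pi/2))"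
proof -
  let ?p = "hfreq g w"
  have p: "?p > 0" "?p^2 = w^2 + g^2" using hfreq_facts[OF g] by auto
  obtain x1 x2 x3 x4 where
    d0: "\<forall>t\<in>{0..pi}. (x has_real_derivative x1 t) (at t within {0..pi})" and
    d1: "\<forall>t\<in>{0..pi}. (x1 has_real_derivative x2 t) (at t within {0..pi})" and
    d2: "\<forall>t\<in>{0..pi}. (x2 has_real_derivative x3 t) (at t within {0..pi})" and
    d3: "\<forall>t\<in>{0..pi}. (x3 has_real_derivative x4 t) (at t within {0..pi})" and
    eq: "\<forall>t\<in>{0..pi}. x4 t - g\<^sup>2 * x2 t = w^2 * ?p^2 * x t" and
    b0: "x 0 = 0" and bpi: "x pi = 0" and
    c0: "T / (pi * g) * x2 0 = x1 0" and cpi: "T / (pi * g) * x2 pi = - x1 pi"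
    using ins unfolding in_eigenspace_def by blast
  obtain A B C D where r: "\<forall>t\<in>{0..pi}. x t = sol w ?p A B C D t \<and> x1 t = sol' w ?p A B C D t
            \<and> x2 t = sol'' w ?p A B C D t"
    using ode_sol_rep[OF convex_real_interval(5) _ w p(1) p(2) d0 d1 d2 d3 eq] by auto
  have z: "0 \<in> {0..pi}" "pi \<in> {0..pi}" using pi_gt_zero by auto
  have "sol w ?p A B C D 0 = 0 \<and> sol w ?p A B C D pi = 0 \<and>
          m * sol'' w ?p A B C D 0 = sol' w ?p A B C D 0 \<and>
          m * sol'' w ?p A B C D pi = - sol' w ?p A B C D pi"
    using r z b0 bpi c0 cpi Tm by auto
  then have s: "A * cos (w * (pi/2)) + C * cosh (?p * (pi/2)) = 0"
      "B * sin (w * (pi/2)) + D * sinh (?p * (pi/2)) = 0"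
      "A * (m * w^2 * cos (w * (pi/2)) + w * sin (w * (pi/2))) = C * (m * ?p^2 * cosh (?p * (pi/2)) + ?p * sinh (?p * (pi/2)))"
      "B * (w * cos (w * (pi/2)) - m * w^2 * sin (w * (pi/2))) + D * (m * ?p^2 * sinh (?p * (pi/2)) + ?p * cosh (?p * (pi/2))) = 0"
    unfolding sol_boundary_conditions_iff by auto
  have chp: "cosh (?p * (pi/2)) > 0" by simp
  have shp: "sinh (?p * (pi/2)) > 0" using p by simp
  have "C * cosh (?p * (pi/2)) = - A * cos (w * (pi/2))" using s(1) by linarith
  then have C: "C = - A * cos (w * (pi/2)) / cosh (?p * (pi/2))" using chp by (simp add: field_simps)
  have "D * sinh (?p * (pi/2)) = - B * sin (w * (pi/2))" using s(2) by linarith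
  then have D: "D = - B * sin (w * (pi/2)) / sinh (?p * (pi/2))"
    using p(1) by (intro eq_divide_imp) simp_all
  have "A * char_even m g w = 0" using s(3) unfolding even_bc_iff[OF chp C] char_even_unfold by simp
  moreover have "B * char_odd m g w = 0" using s(4) unfolding odd_bc_iff[OF shp D] char_odd_unfold by simp
  ultimately show ?thesis using r C D by blast
qed

definition eigval :: "real \<Rightarrow> real \<Rightarrow> real" where "eigval g w = w^2 * (hfreq g w)^2"

text \<open>With these amplitudes the trigonometric part of \<open>e\<^sub>k\<close> is
  \<open>sin (\<omega>\<^sub>k (t - \<pi>/2) + k\<pi>/2)\<close>, which is close to \<open>sin (k t)\<close>.\<close>
definition amp_cos :: "nat \<Rightarrow> real" where "amp_cos k = sin (real k * (pi/2))"

definition amp_sin :: "nat \<Rightarrow> real" where "amp_sin k = cos (real k * (pi/2))"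

definition amp_cosh :: "real \<Rightarrow> real \<Rightarrow> nat \<Rightarrow> real" where
  "amp_cosh m g k = (if odd k then - amp_cos k * cos (freq m g k * (pi/2)) / cosh (hfreq g (freq m g k) * (pi/2)) else 0)"

definition amp_sinh :: "real \<Rightarrow> real \<Rightarrow> nat \<Rightarrow> real" where
  "amp_sinh m g k = (if odd k then 0 else - amp_sin k * sin (freq m g k * (pi/2)) / sinh (hfreq g (freq m g k) * (pi/2)))"

definition efun :: "real \<Rightarrow> real \<Rightarrow> nat \<Rightarrow> real \<Rightarrow> real" where
  "efun m g k = sol (freq m g k) (hfreq g (freq m g k)) (amp_cos k) (amp_sin k) (amp_cosh m g k) (amp_sinh m g k)"

lemma amp_parity:
  "odd k \<Longrightarrow> amp_sin k = 0" "even k \<Longrightarrow> amp_cos k = 0"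
  "odd k \<Longrightarrow> amp_cos k \<noteq> 0" "even k \<Longrightarrow> amp_sin k \<noteq> 0"
proof -
  show o: "odd k \<Longrightarrow> amp_sin k = 0" unfolding amp_sin_def cos_zero_iff_int
    by (rule exI[of _ "int k"]) simp
  show e: "even k \<Longrightarrow> amp_cos k = 0" unfolding amp_cos_def sin_zero_iff_int
    by (rule exI[of _ "int k"]) simp
  have s: "(amp_cos k)^2 + (amp_sin k)^2 = 1" unfolding amp_cos_def amp_sin_def by simp
  show "odd k \<Longrightarrow> amp_cos k \<noteq> 0" using o s by auto
  show "even k \<Longrightarrow> amp_sin k \<noteq> 0" using e s by auto
qed

lemma continuous_on_sol'''': "continuous_on S (sol'''' w p A B C D)"
  unfolding sol''''_def[abs_def] by (intro continuous_intros)

lemma sol_in_eigenspace: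
  assumes g: "g > 0" and m: "m > 0" and Tm: "T / (pi * g) = m" and w: "w > 0"
    and bc: "sol w (hfreq g w) A B C D 0 = 0 \<and> sol w (hfreq g w) A B C D pi = 0 \<and>
          m * sol'' w (hfreq g w) A B C D 0 = sol' w (hfreq g w) A B C D 0 \<and>
          m * sol'' w (hfreq g w) A B C D pi = - sol' w (hfreq g w) A B C D pi"
  shows "in_eigenspace T g (eigval g w) (sol w (hfreq g w) A B C D)"
  unfolding in_eigenspace_def
proof (intro exI conjI ballI)
  let ?p = "hfreq g w"
  have pe: "?p^2 = w^2 + g^2" using hfreq_facts[OF g] by simp
  fix t
  show "(sol w ?p A B C D has_real_derivative sol' w ?p A B C D t) (at t within {0..pi})" by (rule sol_deriv)
  show "(sol' w ?p A B C D has_real_derivative sol'' w ?p A B C D t) (at t within {0..pi})" by (rule sol'_deriv)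
  show "(sol'' w ?p A B C D has_real_derivative sol''' w ?p A B C D t) (at t within {0..pi})" by (rule sol''_deriv)
  show "(sol''' w ?p A B C D has_real_derivative sol'''' w ?p A B C D t) (at t within {0..pi})" by (rule sol'''_deriv)
  show "sol'''' w ?p A B C D t - g\<^sup>2 * sol'' w ?p A B C D t = eigval g w * sol w ?p A B C D t"
    using sol_ode[OF pe] unfolding eigval_def by simp
next
  show "continuous_on {0..pi} (sol'''' w (hfreq g w) A B C D)" by (rule continuous_on_sol'''')
qed (use bc Tm in auto)

lemma efun_in_eigenspace:
  assumes g: "g > 0" and m: "m > 0" and Tm: "T / (pi * g) = m" and k: "k \<ge> 1"
  shows "in_eigenspace T g (eigval g (freq m g k)) (efun m g k)"
proof -
  let ?w = "freq m g k"
  let ?p = "hfreq g ?w"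
  have w: "?w > 0" using freq_spec[OF m g k] by simp
  have p: "?p > 0" using hfreq_facts[OF g] by simp
  have chp: "cosh (?p * (pi/2)) > 0" by simp
  have shp: "sinh (?p * (pi/2)) > 0" using p by simp
  have sys: "amp_cos k * cos (?w * (pi/2)) + amp_cosh m g k * cosh (?p * (pi/2)) = 0 \<and>
          amp_sin k * sin (?w * (pi/2)) + amp_sinh m g k * sinh (?p * (pi/2)) = 0 \<and>
          amp_cos k * (m * ?w^2 * cos (?w * (pi/2)) + ?w * sin (?w * (pi/2))) = amp_cosh m g k * (m * ?p^2 * cosh (?p * (pi/2)) + ?p * sinh (?p * (pi/2))) \<and>
          amp_sin k * (?w * cos (?w * (pi/2)) - m * ?w^2 * sin (?w * (pi/2))) + amp_sinh m g k * (m * ?p^2 * sinh (?p * (pi/2)) + ?p * cosh (?p * (pi/2))) = 0"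
  proof (cases "odd k")
    case True
    have E: "char_even m g ?w = 0" using char_even_zero_iff[OF m g w] k True by blast
    have C: "amp_cosh m g k = - amp_cos k * cos (?w * (pi/2)) / cosh (?p * (pi/2))" unfolding amp_cosh_def using True by simp
    have "amp_cos k * (m * ?w^2 * cos (?w * (pi/2)) + ?w * sin (?w * (pi/2))) = amp_cosh m g k * (m * ?p^2 * cosh (?p * (pi/2)) + ?p * sinh (?p * (pi/2)))"
      unfolding even_bc_iff[OF chp C] using E unfolding char_even_unfold by simp
    then show ?thesis using True amp_parity(1)[OF True] C chp unfolding amp_sinh_def by simp
  next
    case False
    have E: "char_odd m g ?w = 0" using char_odd_zero_iff[OF m g w] k False by blast
    have D: "amp_sinh m g k = - amp_sin k * sin (?w * (pi/2)) / sinh (?p * (pi/2))" unfolding amp_sinh_def using False by simp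
    have "amp_sin k * (?w * cos (?w * (pi/2)) - m * ?w^2 * sin (?w * (pi/2))) + amp_sinh m g k * (m * ?p^2 * sinh (?p * (pi/2)) + ?p * cosh (?p * (pi/2))) = 0"
      unfolding odd_bc_iff[OF shp D] using E unfolding char_odd_unfold by simp
    then show ?thesis using False amp_parity(2) D shp p unfolding amp_cosh_def by simp
  qed
  have bc: "sol ?w ?p (amp_cos k) (amp_sin k) (amp_cosh m g k) (amp_sinh m g k) 0 = 0 \<and> sol ?w ?p (amp_cos k) (amp_sin k) (amp_cosh m g k) (amp_sinh m g k) pi = 0 \<and>
          m * sol'' ?w ?p (amp_cos k) (amp_sin k) (amp_cosh m g k) (amp_sinh m g k) 0 = sol' ?w ?p (amp_cos k) (amp_sin k) (amp_cosh m g k) (amp_sinh m g k) 0 \<and>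
          m * sol'' ?w ?p (amp_cos k) (amp_sin k) (amp_cosh m g k) (amp_sinh m g k) pi = - sol' ?w ?p (amp_cos k) (amp_sin k) (amp_cosh m g k) (amp_sinh m g k) pi"
    unfolding sol_boundary_conditions_iff using sys by simp
  show ?thesis unfolding efun_def by (rule sol_in_eigenspace[OF g m Tm w bc])
qed

lemma sol_scale: "sol w p (a * A) (a * B) (a * C) (a * D) t = a * sol w p A B C D t"
  unfolding sol_def by (simp add: algebra_simps)

lemma eigenspace_in_span_efun:
  assumes g: "g > 0" and m: "m > 0" and Tm: "T / (pi * g) = m" and k: "k \<ge> 1"
    and ins: "in_eigenspace T g (eigval g (freq m g k)) x"
  shows "\<exists>a. \<forall>t\<in>{0..pi}. x t = a * efun m g k t"
proof -
  let ?w = "freq m g k"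
  let ?p = "hfreq g ?w"
  have w: "?w > 0" using freq_spec[OF m g k] by simp
  obtain A B C D where r: "\<forall>t\<in>{0..pi}. x t = sol ?w ?p A B C D t"
     and AE: "A * char_even m g ?w = 0" and C: "C = - A * cos (?w * (pi/2)) / cosh (?p * (pi/2))"
     and BE: "B * char_odd m g ?w = 0" and D: "D = - B * sin (?w * (pi/2)) / sinh (?p * (pi/2))"
    using eigenspace_sol_rep[OF g m Tm w] ins unfolding eigval_def by blast
  show ?thesis
  proof (cases "odd k")
    case True
    have B0: "B = 0" using BE char_at_freq_nonzero(1)[OF m g k True] by simp
    then have D0: "D = 0" using D by simp
    have A0: "amp_cos k \<noteq> 0" using amp_parity(3)[OF True] .
    define a where "a = A / amp_cos k"
    have Aa: "A = a * amp_cos k" unfolding a_def using A0 by simp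
    have Ca: "C = a * amp_cosh m g k" unfolding C amp_cosh_def using True Aa by simp
    have Ba: "B = a * amp_sin k" using B0 amp_parity(1)[OF True] by simp
    have Da: "D = a * amp_sinh m g k" using D0 True unfolding amp_sinh_def by simp
    show ?thesis using r unfolding efun_def Aa Ba Ca Da sol_scale by blast
  next
    case False
    have A0: "A = 0" using AE char_at_freq_nonzero(2)[OF m g k] False by simp
    then have C0: "C = 0" using C by simp
    have B0: "amp_sin k \<noteq> 0" using amp_parity(4) False by simp
    define a where "a = B / amp_sin k"
    have Ba: "B = a * amp_sin k" unfolding a_def using B0 by simp
    have Da: "D = a * amp_sinh m g k" unfolding D amp_sinh_def using False Ba by simp
    have Aa: "A = a * amp_cos k" using A0 amp_parity(2) False by simp
    have Ca: "C = a * amp_cosh m g k" using C0 False unfolding amp_cosh_def by simp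
    show ?thesis using r unfolding efun_def Aa Ba Ca Da sol_scale by blast
  qed
qed

lemma efun_nonzero_odd:
  assumes g: "g > 0" and m: "m > 0" and k: "k \<ge> 1" and odd: "odd k"
  shows "efun m g k (pi/2) \<noteq> 0"
proof -
  let ?w = "freq m g k" and ?p = "hfreq g (freq m g k)"
  have "?p > 0" using hfreq_facts(1)[OF g] by simp
  then have "1 < cosh (?p * (pi/2))" using cosh_real_nonneg_less_iff[of 0 "?p * (pi/2)"] by simp
  then have "cos (?w * (pi/2)) < cosh (?p * (pi/2))" using cos_le_one[of "?w * (pi/2)"] by linarith
  then have "cos (?w * (pi/2)) / cosh (?p * (pi/2)) < 1" by (simp add: divide_less_eq)
  moreover have "efun m g k (pi/2) = amp_cos k * (1 - cos (?w * (pi/2)) / cosh (?p * (pi/2)))"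
    unfolding efun_def sol_def amp_cosh_def amp_sinh_def using odd amp_parity(1)[OF odd]
    by (simp add: algebra_simps)
  ultimately show ?thesis using amp_parity(3)[OF odd] by simp
qed

text \<open>For even \<open>k\<close> the eigenfunction vanishes at \<open>\<pi>/2\<close>; evaluate it where
  \<open>\<omega>\<^sub>k (t - \<pi>/2) = \<pi>/2\<close> instead.\<close>
lemma efun_nonzero_even:
  assumes g: "g > 0" and m: "m > 0" and k: "k \<ge> 1" and even: "even k"
  shows "efun m g k (pi/2 + pi / (2 * freq m g k)) \<noteq> 0"
proof -
  let ?w = "freq m g k" and ?p = "hfreq g (freq m g k)"
  define t0 where "t0 = pi/2 + pi / (2 * ?w)"
  have w1: "?w > 1" using freq_spec[OF m g k] k by simp
  have p: "?p > 0" using hfreq_facts[OF g] by simp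
  have s0: "?w * (t0 - pi/2) = pi/2" unfolding t0_def using w1 by (simp add: field_simps)
  have a: "sinh (?p * (t0 - pi/2)) < sinh (?p * (pi/2))"
    unfolding t0_def using w1 p by (simp add: divide_less_eq)
  have b: "sinh (?p * (t0 - pi/2)) > 0" unfolding t0_def using w1 p by simp
  have "sin (?w * (pi/2)) * sinh (?p * (t0 - pi/2)) \<le> sinh (?p * (t0 - pi/2))"
    using b by (simp add: mult_le_cancel_right1)
  also note a
  finally have "sin (?w * (pi/2)) * sinh (?p * (t0 - pi/2)) / sinh (?p * (pi/2)) < 1"
    using a b by (simp add: divide_less_eq)
  moreover have "efun m g k t0 = amp_sin k * (1 - sin (?w * (pi/2)) * sinh (?p * (t0 - pi/2)) / sinh (?p * (pi/2)))"
    unfolding efun_def sol_def amp_cosh_def amp_sinh_def s0 using even amp_parity(2)[OF even]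
    by (simp add: algebra_simps)
  ultimately show ?thesis unfolding t0_def[symmetric] using amp_parity(4)[OF even]
    by (metis mult_eq_0_iff right_minus_eq less_irrefl)
qed

lemma efun_nonzero:
  assumes g: "g > 0" and m: "m > 0" and k: "k \<ge> 1"
  shows "\<exists>t\<in>{0..pi}. efun m g k t \<noteq> 0"
proof (cases "odd k")
  case True
  then show ?thesis using efun_nonzero_odd[OF g m k] pi_gt_zero by force
next
  case False
  have w1: "freq m g k > 1" using freq_spec[OF m g k] k by simp
  then have "pi / (2 * freq m g k) \<le> pi/2" by (simp add: field_simps)
  then have "pi/2 + pi / (2 * freq m g k) \<in> {0..pi}" using w1 by simp
  then show ?thesis using efun_nonzero_even[OF g m k] False by blast
qed

lemma is_eigenfunction_efun:
  assumes g: "g > 0" and m: "m > 0" and Tm: "T / (pi * g) = m" and k: "k \<ge> 1"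
  shows "is_eigenfunction T g (eigval g (freq m g k)) (efun m g k)"
  unfolding is_eigenfunction_def using efun_in_eigenspace[OF g m Tm k] efun_nonzero[OF g m k] by blast

lemma eigval_surj:
  assumes g: "g > 0" and mu: "mu > 0"
  shows "\<exists>w>0. mu = eigval g w"
proof -
  define S where "S = sqrt (g^4 + 4 * mu)"
  have S2: "S^2 = g^4 + 4 * mu" unfolding S_def using mu g by simp
  have "g^2 < S" unfolding S_def using mu g
    by (intro real_less_rsqrt) (simp add: power2_eq_square power4_eq_xxxx)
  define w where "w = sqrt ((S - g^2) / 2)"
  have w2: "w^2 = (S - g^2) / 2" unfolding w_def using \<open>g^2 < S\<close> by simp
  have wp: "w > 0" unfolding w_def using \<open>g^2 < S\<close> by simp
  have "(hfreq g w)^2 = w^2 + g^2" using hfreq_facts[OF g] by simp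
  then have "eigval g w = ((S - g^2) / 2) * ((S - g^2) / 2 + g^2)" unfolding eigval_def w2 by simp
  also have "\<dots> = (S^2 - g^4) / 4" by (simp add: field_simps power2_eq_square power4_eq_xxxx)
  also have "\<dots> = mu" using S2 by simp
  finally show ?thesis using wp by auto
qed

lemma eigval_strict_mono:
  assumes g: "g > 0" and a: "0 < a" and ab: "a < b"
  shows "eigval g a < eigval g b"
proof -
  have pa: "(hfreq g a)^2 = a^2 + g^2" "(hfreq g b)^2 = b^2 + g^2" using hfreq_facts[OF g] by auto
  have "a^2 < b^2" using a ab by (simp add: power_strict_mono)
  moreover have "a^2 + g^2 < b^2 + g^2" using \<open>a^2 < b^2\<close> by simp
  moreover have "a^2 > 0" using a by simp
  ultimately have "a^2 * (a^2 + g^2) < b^2 * (b^2 + g^2)"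
    by (intro mult_strict_mono) (auto simp: add_pos_nonneg)
  then show ?thesis unfolding eigval_def pa .
qed

lemma eigenspace_trivial_off_spectrum:
  assumes g: "g > 0" and m: "m > 0" and Tm: "T / (pi * g) = m"
    and ins: "in_eigenspace T g mu x" and off: "\<forall>k\<ge>1. mu \<noteq> eigval g (freq m g k)"
  shows "\<forall>t\<in>{0..pi}. x t = 0"
proof (cases "mu \<le> 0")
  case True
  then show ?thesis using eigenspace_nonpos_trivial[OF g m Tm ins] by simp
next
  case False
  then have "mu > 0" by simp
  then obtain w where w: "w > 0" "mu = eigval g w" using eigval_surj[OF g] by blast
  obtain A B C D where r: "\<forall>t\<in>{0..pi}. x t = sol w (hfreq g w) A B C D t"
     and AE: "A * char_even m g w = 0" and C: "C = - A * cos (w * (pi/2)) / cosh (hfreq g w * (pi/2))"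
     and BE: "B * char_odd m g w = 0" and D: "D = - B * sin (w * (pi/2)) / sinh (hfreq g w * (pi/2))"
    using eigenspace_sol_rep[OF g m Tm w(1)] ins w(2) unfolding eigval_def by blast
  have "\<not> (\<exists>k. k \<ge> 1 \<and> w = freq m g k)" using off w(2) by blast
  then have "char_even m g w \<noteq> 0" "char_odd m g w \<noteq> 0"
    unfolding char_even_zero_iff[OF m g w(1)] char_odd_zero_iff[OF m g w(1)] by blast+
  then have "A = 0" "B = 0" using AE BE by simp_all
  then show ?thesis using r C D unfolding sol_def by simp
qed

lemma eig_mult_eq:
  assumes g: "g > 0" and m: "m > 0" and Tm: "T / (pi * g) = m"
  shows "eig_mult T g mu = (if \<exists>k\<ge>1. mu = eigval g (freq m g k) then 1 else 0)"
proof (cases "\<exists>k\<ge>1. mu = eigval g (freq m g k)")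
  case True
  then obtain k where k: "k \<ge> 1" "mu = eigval g (freq m g k)" by blast
  obtain t0 where t0: "t0 \<in> {0..pi}" "efun m g k t0 \<noteq> 0" using efun_nonzero[OF g m k(1)] by blast
  have "eig_mult T g mu = 1"
    unfolding k(2)
    by (rule eig_mult_one[OF eigenspace_in_span_efun[OF g m Tm k(1)] efun_in_eigenspace[OF g m Tm k(1)] t0])
  then show ?thesis using True by simp
next
  case False
  then have "eig_mult T g mu = 0"
    using eigenspace_trivial_off_spectrum[OF g m Tm] by (intro eig_mult_zero) blast
  then show ?thesis using False by simp
qed

lemma mono_from_one:
  fixes f :: "nat \<Rightarrow> 'a::order"
  assumes incr: "\<forall>k\<ge>1. f k \<le> f (Suc k)" and i: "1 \<le> i" and ij: "i \<le> j"
  shows "f i \<le> f j"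
  using ij
proof (induction j rule: dec_induct)
  case (step j)
  then show ?case using incr i by (meson order_trans le_trans)
qed simp

lemma singleton_level_sets:
  fixes lam Lm :: "nat \<Rightarrow> 'a"
  assumes cnt: "\<And>mu. finite {k. k \<ge> 1 \<and> lam k = mu}
      \<and> card {k. k \<ge> 1 \<and> lam k = mu} = (if \<exists>j\<ge>1. mu = Lm j then 1 else 0)"
  shows "\<And>k. k \<ge> 1 \<Longrightarrow> \<exists>j\<ge>1. lam k = Lm j"
    and "\<And>j. j \<ge> 1 \<Longrightarrow> \<exists>k\<ge>1. lam k = Lm j"
    and "\<And>i k. i \<ge> 1 \<Longrightarrow> k \<ge> 1 \<Longrightarrow> lam i = lam k \<Longrightarrow> i = k"
proof -
  fix k :: nat assume k: "k \<ge> 1"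
  then have "{k'. k' \<ge> 1 \<and> lam k' = lam k} \<noteq> {}" by blast
  moreover have "finite {k'. k' \<ge> 1 \<and> lam k' = lam k}" using cnt[of "lam k"] by blast
  ultimately have "card {k'. k' \<ge> 1 \<and> lam k' = lam k} \<noteq> 0" by simp
  then show "\<exists>j\<ge>1. lam k = Lm j" using cnt[of "lam k"] by presburger
next
  fix j :: nat assume "j \<ge> 1"
  then have "card {k. k \<ge> 1 \<and> lam k = Lm j} = 1" using cnt[of "Lm j"] by auto
  then show "\<exists>k\<ge>1. lam k = Lm j" by (metis (mono_tags, lifting) card.empty empty_Collect_eq zero_neq_one)
next
  fix i k :: nat assume ik: "i \<ge> 1" "k \<ge> 1" "lam i = lam k"
  let ?A = "{k'. k' \<ge> 1 \<and> lam k' = lam k}"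
  have "finite ?A" "card ?A \<le> Suc 0" using cnt[of "lam k"] by simp_all
  then have "\<forall>a\<in>?A. \<forall>b\<in>?A. a = b" by (simp only: card_le_Suc0_iff_eq)
  then show "i = k" using ik by blast
qed

lemma enumeration_eq:
  fixes lam Lm :: "nat \<Rightarrow> 'a::linorder"
  assumes sm: "\<And>i j. 1 \<le> i \<Longrightarrow> i < j \<Longrightarrow> Lm i < Lm j"
    and incr: "\<forall>k\<ge>1. lam k \<le> lam (Suc k)"
    and cnt: "\<And>mu. finite {k. k \<ge> 1 \<and> lam k = mu}
        \<and> card {k. k \<ge> 1 \<and> lam k = mu} = (if \<exists>j\<ge>1. mu = Lm j then 1 else 0)"
    and n: "n \<ge> 1"
  shows "lam n = Lm n"
  using n
proof (induction n rule: less_induct)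
  case (less n)
  note level = singleton_level_sets[OF cnt]
  obtain j where j: "j \<ge> 1" "lam n = Lm j" using level(1) less.prems by blast
  obtain i where i: "i \<ge> 1" "lam i = Lm n" using level(2) less.prems by blast
  have "\<not> j < n"
  proof
    assume "j < n"
    then have "lam j = lam n" using less.IH j by simp
    then show False using level(3)[OF j(1) less.prems] \<open>j < n\<close> by simp
  qed
  moreover have "\<not> n < j"
  proof
    assume "n < j"
    have "\<not> i < n"
    proof
      assume "i < n"
      then show False using less.IH[OF _ i(1)] i(2) sm[OF i(1)] by fastforce
    qed
    then have "lam n \<le> lam i" using mono_from_one[OF incr less.prems] by simp
    then show False using sm[OF less.prems \<open>n < j\<close>] i j by simp
  qed
  ultimately show ?case using j by simp
qed

lemma eigval_freq_strict_mono:
  assumes g: "g > 0" and m: "m > 0" and i: "1 \<le> i" and ij: "i < j"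
  shows "eigval g (freq m g i) < eigval g (freq m g j)"
proof -
  have a: "real i < freq m g i" "freq m g i < real i + 1" using freq_spec[OF m g i] by auto
  have b: "real j < freq m g j" using freq_spec[OF m g] i ij by auto
  have "real i + 1 \<le> real j" using ij by simp
  then have "freq m g i < freq m g j" using a b by linarith
  moreover have "freq m g i > 0" using a i by simp
  ultimately show ?thesis using eigval_strict_mono[OF g] by blast
qed

lemma eigenvalues_eq_eigval_freq:
  fixes lam :: "nat \<Rightarrow> real"
  assumes g: "g > 0" and m: "m > 0" and Tm: "T / (pi * g) = m"
    and incr: "\<forall>k\<ge>1. lam k \<le> lam (Suc k)"
    and enum: "\<forall>mu. finite {k. k \<ge> 1 \<and> lam k = mu}
                    \<and> card {k. k \<ge> 1 \<and> lam k = mu} = eig_mult T g mu"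
    and k: "k \<ge> 1"
  shows "lam k = eigval g (freq m g k)"
proof (rule enumeration_eq[OF eigval_freq_strict_mono[OF g m] incr _ k])
  fix mu
  show "finite {k. k \<ge> 1 \<and> lam k = mu} \<and> card {k. k \<ge> 1 \<and> lam k = mu}
      = (if \<exists>j\<ge>1. mu = eigval g (freq m g j) then 1 else 0)"
    using enum eig_mult_eq[OF g m Tm, of mu] by simp
qed

section \<open>Eigenvalue asymptotics\<close>

definition freq_shift :: "real \<Rightarrow> real \<Rightarrow> nat \<Rightarrow> real" where
  "freq_shift m g k = freq m g k - real k"

lemma freq_shift_bound:
  assumes m: "m > 0" and g: "g > 0" and k: "k \<ge> 1"
  shows "freq_shift m g k * (pi/2) \<le> 1 / (2 * m * real k)"
  unfolding freq_shift_def
proof -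
  let ?w = "freq m g k"
  have o: "real k < ?w" "?w < real k + 1" "phase (Npar m g k) ?w = real k * (pi/2)" using freq_spec[OF m g k] by auto
  have w: "?w > 0" using o k by simp
  have N: "Npar m g k ?w \<ge> m * (?w^2 + (hfreq g ?w)^2)" using Npar_facts(4)[OF m g w] by simp
  have pw: "?w \<le> hfreq g ?w" using hfreq_facts(3)[OF g] by simp
  have "?w^2 \<le> (hfreq g ?w)^2" using pw w by (simp add: power_mono)
  then have "m * (?w^2 + ?w^2) \<le> m * (?w^2 + (hfreq g ?w)^2)" using m by (intro mult_left_mono) auto
  then have N2: "Npar m g k ?w \<ge> 2 * m * ?w^2" using N by simp
  have Np: "2 * m * ?w^2 > 0" using m w by simp
  have "(?w - real k) * (pi/2) = arctan (?w / Npar m g k ?w)"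
    using o(3) unfolding phase_def by (simp add: algebra_simps)
  also have "\<dots> \<le> ?w / Npar m g k ?w" using w N2 Np by (intro arctan_le_self) simp
  also have "\<dots> \<le> ?w / (2 * m * ?w^2)" using w N2 Np by (intro divide_left_mono) auto
  also have "\<dots> = 1 / (2 * m * ?w)" using w by (simp add: power2_eq_square)
  also have "\<dots> \<le> 1 / (2 * m * real k)"
  proof -
    have "2 * m * real k \<le> 2 * m * ?w" using m o by simp
    moreover have "2 * m * real k > 0" using m k by simp
    ultimately show ?thesis by (intro frac_le) auto
  qed
  finally show "(?w - real k) * (pi/2) \<le> 1 / (2 * m * real k)" .
qed

lemma eigval_freq_asymp:
  assumes m: "m > 0" and g: "g > 0" and k: "k \<ge> 1"
  shows "\<bar>eigval g (freq m g k) - real k ^ 4\<bar> \<le> (15 / (pi * m) + 4 * g^2) * (real k)^2"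
proof -
  let ?w = "freq m g k"
  define x where "x = real k"
  have x1: "x \<ge> 1" unfolding x_def using k by simp
  have o: "x < ?w" "?w < x + 1" using freq_spec[OF m g k] unfolding x_def by auto
  have db: "(?w - x) * (pi/2) \<le> 1 / (2 * m * x)" using freq_shift_bound[OF m g k] unfolding x_def freq_shift_def .
  have d: "?w - x \<le> (1 / (pi * m)) / x"
  proof -
    have "(?w - x) = ((?w - x) * (pi/2)) * (2 / pi)" by simp
    also have "\<dots> \<le> (1 / (2 * m * x)) * (2 / pi)" using db by (intro mult_right_mono) auto
    also have "\<dots> = (1 / (pi * m)) / x" by (simp add: field_simps)
    finally show ?thesis .
  qed
  have Lw: "eigval g ?w = ?w^4 + g^2 * ?w^2"
    using hfreq_facts(2)[OF g, of ?w] unfolding eigval_def by (simp add: algebra_simps power4_eq_xxxx power2_eq_square)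
  have f: "?w^4 - x^4 = (?w - x) * ((?w + x) * (?w^2 + x^2))"
    by (simp add: algebra_simps power4_eq_xxxx power2_eq_square)
  have b1: "?w + x \<le> 3 * x" using o x1 by simp
  have "?w^2 \<le> (x+1)^2" using o x1 by (intro power_mono) auto
  also have "\<dots> \<le> (2*x)^2" using x1 by (intro power_mono) auto
  finally have ww: "?w^2 \<le> 4 * x^2" by (simp add: power2_eq_square)
  have b2: "?w^2 + x^2 \<le> 5 * x^2" using ww by simp
  have nn: "0 \<le> ?w - x" "0 \<le> ?w + x" "0 \<le> ?w^2 + x^2" using o x1 by auto
  have pb: "(?w + x) * (?w^2 + x^2) \<le> (3 * x) * (5 * x^2)"
    using b1 b2 nn x1 by (intro mult_mono) auto
  have "?w^4 - x^4 \<le> ((1 / (pi * m)) / x) * ((3 * x) * (5 * x^2))"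
    unfolding f by (rule mult_mono[OF d pb]) (use nn m x1 in auto)
  also have "\<dots> = 15 / (pi * m) * x^2" using x1 by (simp add: field_simps power2_eq_square)
  finally have A: "?w^4 - x^4 \<le> 15 / (pi * m) * x^2" .
  have A0: "?w^4 - x^4 \<ge> 0" unfolding f using nn by simp
  have "g^2 * ?w^2 \<le> g^2 * (4 * x^2)" using ww by (intro mult_left_mono) auto
  then have B: "g^2 * ?w^2 \<le> 4 * g^2 * x^2" by simp
  have B0: "g^2 * ?w^2 \<ge> 0" by simp
  have "eigval g ?w - x ^ 4 = (?w^4 - x^4) + g^2 * ?w^2" using Lw by simp
  moreover have "(?w^4 - x^4) + g^2 * ?w^2 \<ge> 0" using A0 B0 by simp
  ultimately have "\<bar>eigval g ?w - x ^ 4\<bar> = (?w^4 - x^4) + g^2 * ?w^2" by simp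
  also have "\<dots> \<le> (15 / (pi * m) + 4 * g^2) * x^2" using A B by (simp add: algebra_simps)
  finally show ?thesis unfolding x_def .
qed

lemma eigenvalue_asymp:
  assumes m: "m > 0" and g: "g > 0" and eq: "\<forall>k\<ge>1. lam k = eigval g (freq m g k)"
  shows "(\<lambda>k. lam k - real k ^ 4) \<in> O(\<lambda>k. real k ^ 2)"
proof (rule bigoI[where c = "15 / (pi * m) + 4 * g^2"])
  show "\<forall>\<^sub>F k in at_top. norm (lam k - real k ^ 4) \<le> (15 / (pi * m) + 4 * g^2) * norm (real k ^ 2)"
    unfolding eventually_sequentially
  proof (intro exI[of _ 1] allI impI)
    fix k :: nat assume k: "1 \<le> k"
    show "norm (lam k - real k ^ 4) \<le> (15 / (pi * m) + 4 * g^2) * norm (real k ^ 2)"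
      using eigval_freq_asymp[OF m g k] eq k by simp
  qed
qed

lemma cos_shift_has_real_derivative:
  "((\<lambda>t. a * b ^ l * cos (b * t + c + real l * (pi/2))) has_real_derivative
      a * b ^ Suc l * cos (b * t + c + real (Suc l) * (pi/2))) (at t within S)"
proof -
  have arg: "b * t + c + real (Suc l) * (pi/2) = (b * t + c + real l * (pi/2)) + pi/2"
    by (simp add: algebra_simps)
  have "cos (b * t + c + real (Suc l) * (pi/2)) = - sin (b * t + c + real l * (pi/2))"
    unfolding arg by (simp only: cos_add cos_pi_half sin_pi_half mult_zero_right mult_1_right diff_zero)
  then show ?thesis by (auto intro!: derivative_eq_intros)
qed

lemma Cj_norm_le_cos:
  fixes a b c d B :: real
  assumes b0: "\<forall>t\<in>{0..pi}. \<bar>a * cos (b * t + c) + d\<bar> \<le> B"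
    and bl: "\<forall>l. 1 \<le> l \<longrightarrow> l \<le> j \<longrightarrow> \<bar>a\<bar> * \<bar>b\<bar> ^ l \<le> B"
  shows "Cj_norm_le j (\<lambda>t. a * cos (b * t + c) + d) B"
  unfolding Cj_norm_le_def
proof (intro exI[of _ "\<lambda>l t. a * b ^ l * cos (b * t + c + real l * (pi/2)) + (if l = 0 then d else 0)"]
    conjI allI impI ballI)
  fix l :: nat and t :: real
  show "((\<lambda>t. a * b ^ l * cos (b * t + c + real l * (pi/2)) + (if l = 0 then d else 0)) has_real_derivative
      a * b ^ Suc l * cos (b * t + c + real (Suc l) * (pi/2)) + (if Suc l = 0 then d else 0)) (at t within {0..pi})"
    using DERIV_add[OF cos_shift_has_real_derivative DERIV_const] by simp
  assume "l \<le> j" and t: "t \<in> {0..pi}"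
  show "\<bar>a * b ^ l * cos (b * t + c + real l * (pi/2)) + (if l = 0 then d else 0)\<bar> \<le> B"
  proof (cases "l = 0")
    case True then show ?thesis using b0 t by simp
  next
    case False
    have "\<bar>a * b ^ l * cos (b * t + c + real l * (pi/2))\<bar> \<le> \<bar>a\<bar> * \<bar>b\<bar> ^ l * 1"
      unfolding abs_mult power_abs by (intro mult_left_mono) auto
    moreover have "\<bar>a\<bar> * \<bar>b\<bar> ^ l \<le> B" using bl \<open>l \<le> j\<close> False by simp
    ultimately show ?thesis using False by simp
  qed
qed (simp_all add: continuous_intros)

lemma Cj_norm_le_exp:
  fixes a b c B :: real
  assumes bl: "\<forall>l\<le>j. \<forall>t\<in>{0..pi}. \<bar>a\<bar> * \<bar>b\<bar> ^ l * exp (b * t + c) \<le> B"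
  shows "Cj_norm_le j (\<lambda>t. a * exp (b * t + c)) B"
  unfolding Cj_norm_le_def
proof (intro exI[of _ "\<lambda>l t. a * b ^ l * exp (b * t + c)"] conjI allI impI ballI)
  fix t :: real show "a * b ^ 0 * exp (b * t + c) = a * exp (b * t + c)" by simp
next
  fix l :: nat and t :: real assume l: "l < j" and t: "t \<in> {0..pi}"
  have der: "((\<lambda>t. a * b ^ l * exp (b * t + c)) has_real_derivative a * b ^ l * (exp (b * t + c) * b)) (at t within {0..pi})"
    by (auto intro!: derivative_eq_intros)
  have eq: "a * b ^ Suc l * exp (b * t + c) = a * b ^ l * (exp (b * t + c) * b)"
    by (simp add: mult_ac)
  show "((\<lambda>t. a * b ^ l * exp (b * t + c)) has_real_derivative a * b ^ Suc l * exp (b * t + c)) (at t within {0..pi})"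
    unfolding eq by (rule der)
next
  fix l :: nat assume "l \<le> j"
  show "continuous_on {0..pi} (\<lambda>t. a * b ^ l * exp (b * t + c))" by (intro continuous_intros)
next
  fix l :: nat and t :: real assume l: "l \<le> j" and t: "t \<in> {0..pi}"
  have "\<bar>a * b ^ l * exp (b * t + c)\<bar> = \<bar>a\<bar> * \<bar>b\<bar> ^ l * exp (b * t + c)"
    by (simp add: abs_mult power_abs)
  then show "\<bar>a * b ^ l * exp (b * t + c)\<bar> \<le> B" using bl l t by simp
qed

lemma Cj_norm_le_mono:
  assumes "Cj_norm_le j f B" "B \<le> B'" shows "Cj_norm_le j f B'"
proof -
  obtain D where D: "\<forall>t\<in>{0..pi}. D 0 t = f t"
     "\<forall>l<j. \<forall>t\<in>{0..pi}. (D l has_real_derivative D (Suc l) t) (at t within {0..pi})"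
     "\<forall>l\<le>j. continuous_on {0..pi} (D l)" "\<forall>l\<le>j. \<forall>t\<in>{0..pi}. \<bar>D l t\<bar> \<le> B"
    using assms(1) unfolding Cj_norm_le_def by blast
  have "\<forall>l\<le>j. \<forall>t\<in>{0..pi}. \<bar>D l t\<bar> \<le> B'" using D(4) assms(2) by force
  then show ?thesis unfolding Cj_norm_le_def using D(1-3) by blast
qed

lemma Cj_norm_le_exp_decay:
  assumes r: "\<bar>b\<bar> \<le> r" "1 \<le> r" and decay: "\<forall>t\<in>{0..pi}. b * t + c \<le> 0"
  shows "Cj_norm_le j (\<lambda>t. K * exp (b * t + c)) (\<bar>K\<bar> * r ^ j)"
proof (rule Cj_norm_le_exp, intro allI impI ballI)
  fix l t assume l: "l \<le> j" and t: "t \<in> {0..pi}"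
  have "\<bar>b\<bar> ^ l \<le> r ^ l" using r by (intro power_mono) auto
  also have "\<dots> \<le> r ^ j" using r l by (intro power_increasing) auto
  finally have "\<bar>b\<bar> ^ l \<le> r ^ j" .
  moreover have "exp (b * t + c) \<le> 1" using decay t by simp
  ultimately have "\<bar>b\<bar> ^ l * exp (b * t + c) \<le> r ^ j * 1" using r(2) by (intro mult_mono) auto
  then show "\<bar>K\<bar> * \<bar>b\<bar> ^ l * exp (b * t + c) \<le> \<bar>K\<bar> * r ^ j"
    by (simp add: mult.assoc mult_left_mono)
qed

section \<open>The expansion of the eigenfunctions\<close>

text \<open>Write \<open>\<omega>\<^sub>k = k + \<delta>\<^sub>k\<close>, \<open>p\<^sub>k = k + q\<^sub>k\<close> and \<open>s = t - \<pi>/2\<close>.  The trigonometric part of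
  \<open>e\<^sub>k\<close> is \<open>sin (k t + \<delta>\<^sub>k s)\<close>, which gives the corrections \<open>g\<^sup>(\<^sup>1\<^sup>)\<close>, \<open>g\<^sup>(\<^sup>2\<^sup>)\<close>; the
  hyperbolic part is a combination of \<open>e\<^sup>-\<^sup>p\<^sup>\<^sub>k\<^sup>s\<close> and \<open>e\<^sup>p\<^sup>\<^sub>k\<^sup>s\<close>, boundary layers at
  \<open>0\<close> and \<open>\<pi>\<close>, which give \<open>g\<^sup>(\<^sup>3\<^sup>)\<close>, \<open>g\<^sup>(\<^sup>4\<^sup>)\<close>.\<close>

definition hfreq_shift :: "real \<Rightarrow> real \<Rightarrow> nat \<Rightarrow> real" where
  "hfreq_shift m g k = hfreq g (freq m g k) - real k"

definition layer_left :: "real \<Rightarrow> real \<Rightarrow> nat \<Rightarrow> real" where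
  "layer_left m g k = real k * (amp_cosh m g k - amp_sinh m g k) * exp (hfreq g (freq m g k) * (pi/2)) / 2"

definition layer_right :: "real \<Rightarrow> real \<Rightarrow> nat \<Rightarrow> real" where
  "layer_right m g k = real k * (amp_cosh m g k + amp_sinh m g k) * exp (hfreq g (freq m g k) * (pi/2)) / 2"

definition corr :: "real \<Rightarrow> real \<Rightarrow> nat \<Rightarrow> nat \<Rightarrow> real \<Rightarrow> real" where
  "corr m g i k t =
     (if i = 1 then real k * (cos (freq_shift m g k * (t - pi/2)) - 1)
      else if i = 2 then real k * sin (freq_shift m g k * (t - pi/2))
      else if i = 3 then layer_left m g k * exp (- hfreq_shift m g k * t)
      else layer_right m g k * exp (- hfreq_shift m g k * (pi - t)))"

lemma efun_expansion:
  assumes k: "k \<ge> 1"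
  shows "efun m g k t = sin (real k * t) + (1 / real k) * (\<Sum>i\<in>{1..4}. corr m g i k t * fbasis i k t)"
proof -
  let ?w = "freq m g k" and ?p = "hfreq g (freq m g k)"
  let ?d = "freq_shift m g k" and ?q = "hfreq_shift m g k"
  define s where "s = t - pi/2"
  define x where "x = real k"
  have x0: "x \<noteq> 0" unfolding x_def using k by simp
  have trig: "amp_cos k * cos (?w * s) + amp_sin k * sin (?w * s)
      = sin (x * t) * cos (?d * s) + cos (x * t) * sin (?d * s)"
  proof -
    have "amp_cos k * cos (?w * s) + amp_sin k * sin (?w * s) = sin (?w * s + x * (pi/2))"
      unfolding amp_cos_def amp_sin_def x_def by (simp add: sin_add algebra_simps)
    also have "?w * s + x * (pi/2) = x * t + ?d * s"
      unfolding freq_shift_def s_def x_def by (simp add: algebra_simps)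
    finally show ?thesis by (simp add: sin_add)
  qed
  have hyp: "amp_cosh m g k * cosh (?p * s) + amp_sinh m g k * sinh (?p * s)
      = (amp_cosh m g k - amp_sinh m g k) / 2 * (exp (?p * (pi/2)) * exp (- ?q * t) * exp (- x * t))
      + (amp_cosh m g k + amp_sinh m g k) / 2 * (exp (?p * (pi/2)) * exp (- ?q * (pi - t)) * exp (- x * (pi - t)))"
  proof -
    have "exp (- (?p * s)) = exp (?p * (pi/2)) * exp (- ?q * t) * exp (- x * t)"
      "exp (?p * s) = exp (?p * (pi/2)) * exp (- ?q * (pi - t)) * exp (- x * (pi - t))"
      unfolding s_def hfreq_shift_def x_def by (simp_all add: exp_add[symmetric] algebra_simps)
    then show ?thesis by (simp add: cosh_field_def sinh_field_def field_simps)
  qed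
  have "{1..4::nat} = {1,2,3,4}" by auto
  then have sum: "(\<Sum>i\<in>{1..4}. corr m g i k t * fbasis i k t)
      = x * (cos (?d * s) - 1) * sin (x * t) + x * sin (?d * s) * cos (x * t)
        + layer_left m g k * exp (- ?q * t) * exp (- x * t)
        + layer_right m g k * exp (- ?q * (pi - t)) * exp (- x * (pi - t))"
    by (simp add: corr_def fbasis_def s_def x_def)
  have "efun m g k t = (amp_cos k * cos (?w * s) + amp_sin k * sin (?w * s))
      + (amp_cosh m g k * cosh (?p * s) + amp_sinh m g k * sinh (?p * s))"
    unfolding efun_def sol_def s_def by simp
  also have "\<dots> = sin (x * t) + (1 / x) * (x * (cos (?d * s) - 1) * sin (x * t) + x * sin (?d * s) * cos (x * t)
        + layer_left m g k * exp (- ?q * t) * exp (- x * t)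
        + layer_right m g k * exp (- ?q * (pi - t)) * exp (- x * (pi - t)))"
    unfolding trig hyp layer_left_def layer_right_def x_def[symmetric] using x0
    by (simp add: field_simps)
  finally show ?thesis unfolding sum x_def .
qed

lemma one_minus_cos_le: fixes y :: real shows "1 - cos y \<le> y\<^sup>2 / 2"
proof -
  have "\<bar>sin (y/2)\<bar> \<le> \<bar>y/2\<bar>" by (rule abs_sin_x_le_abs_x)
  then have "(sin (y/2))\<^sup>2 \<le> (y/2)\<^sup>2" by (metis abs_le_square_iff power2_abs)
  then show ?thesis using cos_double_sin[of "y/2"] by (simp add: power_divide)
qed

lemma freq_shift_facts:
  assumes m: "m > 0" and g: "g > 0" and k: "k \<ge> 1"
  shows "0 < freq_shift m g k" "freq_shift m g k < 1"
    "real k * (freq_shift m g k * (pi/2)) \<le> 1 / (2 * m)" "freq_shift m g k * (pi/2) \<le> 1 / (2 * m)"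
    "0 \<le> hfreq_shift m g k" "hfreq_shift m g k \<le> g + 1"
proof -
  have o: "real k < freq m g k" "freq m g k < real k + 1" using freq_spec[OF m g k] by auto
  show "0 < freq_shift m g k" "freq_shift m g k < 1" using o unfolding freq_shift_def by auto
  have d: "freq_shift m g k * (pi/2) \<le> 1 / (2 * m * real k)" by (rule freq_shift_bound[OF m g k])
  have kp: "real k > 0" using k by simp
  have "real k * (freq_shift m g k * (pi/2)) \<le> real k * (1 / (2 * m * real k))"
    using d kp by (intro mult_left_mono) auto
  then show "real k * (freq_shift m g k * (pi/2)) \<le> 1 / (2 * m)" using kp by simp
  have "1 / (2 * m * real k) \<le> 1 / (2 * m)" using m k by (intro frac_le) auto
  then show "freq_shift m g k * (pi/2) \<le> 1 / (2 * m)" using d by linarith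
  have "freq m g k \<le> hfreq g (freq m g k)" "hfreq g (freq m g k) \<le> \<bar>freq m g k\<bar> + g"
    using hfreq_facts(3,4)[OF g] by auto
  then show "0 \<le> hfreq_shift m g k" "hfreq_shift m g k \<le> g + 1"
    using o unfolding hfreq_shift_def by auto
qed

lemma freq_shift_pow_le:
  assumes m: "m > 0" and g: "g > 0" and k: "k \<ge> 1" and l: "1 \<le> l"
  shows "real k * \<bar>freq_shift m g k\<bar> ^ l \<le> 1 / m"
proof -
  note F = freq_shift_facts[OF m g k]
  have "freq_shift m g k ^ l \<le> freq_shift m g k ^ 1"
    by (rule power_decreasing) (use F(1,2) l in auto)
  then have "\<bar>freq_shift m g k\<bar> ^ l \<le> freq_shift m g k" using F(1) by simp
  then have "real k * \<bar>freq_shift m g k\<bar> ^ l \<le> real k * (freq_shift m g k * (pi/2)) * (2 / pi)"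
    by (simp add: mult_left_mono)
  also have "\<dots> \<le> 1 / (2 * m) * (2 / pi)" using F(3) by (intro mult_right_mono) auto
  also have "\<dots> \<le> 1 / m" using m pi_gt3 by (simp add: field_simps)
  finally show ?thesis .
qed

lemma exp_le_two_cosh: fixes x :: real shows "exp x \<le> 2 * cosh x"
  by (simp add: cosh_field_def)

lemma exp_le_four_sinh:
  fixes x :: real assumes x: "1 \<le> x" shows "exp x \<le> 4 * sinh x"
proof -
  have "2 \<le> exp x" using exp_ge_add_one_self[of x] x by linarith
  then have "4 \<le> exp x * exp x" by (metis mult_mono' mult_2 numeral_Bit0 zero_le_numeral)
  then have "exp (- x) \<le> exp x / 2" by (simp add: exp_minus field_simps)
  then show ?thesis by (simp add: sinh_field_def)
qed

lemma amp_trig_defect: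
  assumes m: "m > 0" and g: "g > 0" and k: "k \<ge> 1"
  shows "\<bar>amp_cos k * cos (freq m g k * (pi/2))\<bar> \<le> freq_shift m g k * (pi/2)"
    "\<bar>amp_sin k * sin (freq m g k * (pi/2))\<bar> \<le> freq_shift m g k * (pi/2)"
proof -
  let ?e = "freq_shift m g k * (pi/2)"
  have split: "freq m g k * (pi/2) = real k * (pi/2) + ?e" unfolding freq_shift_def by (simp add: algebra_simps)
  have prod: "amp_cos k * amp_sin k = 0" using amp_parity(1,2) by (cases "odd k") auto
  have sq: "(amp_cos k)\<^sup>2 \<le> 1" "(amp_sin k)\<^sup>2 \<le> 1"
    unfolding amp_cos_def amp_sin_def by (simp_all add: abs_square_le_1)
  have se: "\<bar>sin ?e\<bar> \<le> ?e" using abs_sin_x_le_abs_x[of ?e] freq_shift_facts(1)[OF m g k] by simp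
  have cs: "cos (freq m g k * (pi/2)) = amp_sin k * cos ?e - amp_cos k * sin ?e"
    "sin (freq m g k * (pi/2)) = amp_cos k * cos ?e + amp_sin k * sin ?e"
    unfolding split amp_cos_def amp_sin_def by (simp_all add: cos_add sin_add)
  have "amp_cos k * cos (freq m g k * (pi/2)) = (amp_cos k * amp_sin k) * cos ?e - (amp_cos k)\<^sup>2 * sin ?e"
    "amp_sin k * sin (freq m g k * (pi/2)) = (amp_cos k * amp_sin k) * cos ?e + (amp_sin k)\<^sup>2 * sin ?e"
    unfolding cs by (simp_all add: algebra_simps power2_eq_square)
  then have "amp_cos k * cos (freq m g k * (pi/2)) = - (amp_cos k)\<^sup>2 * sin ?e"
    "amp_sin k * sin (freq m g k * (pi/2)) = (amp_sin k)\<^sup>2 * sin ?e"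
    using prod by simp_all
  moreover have "(amp_cos k)\<^sup>2 * \<bar>sin ?e\<bar> \<le> 1 * ?e" by (rule mult_mono[OF sq(1) se]) simp_all
  moreover have "(amp_sin k)\<^sup>2 * \<bar>sin ?e\<bar> \<le> 1 * ?e" by (rule mult_mono[OF sq(2) se]) simp_all
  ultimately show "\<bar>amp_cos k * cos (freq m g k * (pi/2))\<bar> \<le> ?e"
    "\<bar>amp_sin k * sin (freq m g k * (pi/2))\<bar> \<le> ?e"
    by (simp_all add: abs_mult)
qed

lemma amp_layer_bound:
  assumes m: "m > 0" and g: "g > 0" and k: "k \<ge> 1"
  shows "(\<bar>amp_cosh m g k\<bar> + \<bar>amp_sinh m g k\<bar>) * exp (hfreq g (freq m g k) * (pi/2))
    \<le> 4 * (freq_shift m g k * (pi/2))"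
proof -
  define x where "x = hfreq g (freq m g k) * (pi/2)"
  have "1 * 1 \<le> hfreq g (freq m g k) * (pi/2)"
    using freq_spec[OF m g k] k hfreq_facts(3)[OF g, of "freq m g k"] pi_gt3
    by (intro mult_mono) auto
  then have x: "1 \<le> x" unfolding x_def by simp
  note defect = amp_trig_defect[OF m g k]
  have e: "0 \<le> freq_shift m g k * (pi/2)" using freq_shift_facts(1)[OF m g k] by simp
  show ?thesis
  proof (cases "odd k")
    case True
    have "\<bar>amp_cosh m g k\<bar> * exp x = \<bar>amp_cos k * cos (freq m g k * (pi/2))\<bar> * (exp x / cosh x)"
      unfolding amp_cosh_def x_def using True by (simp add: abs_mult)
    also have "\<dots> \<le> freq_shift m g k * (pi/2) * 2"
      using defect(1) exp_le_two_cosh[of x] by (intro mult_mono) (auto simp: divide_le_eq)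
    finally show ?thesis using True e unfolding amp_sinh_def x_def by (simp add: algebra_simps)
  next
    case False
    have sx: "sinh x > 0" using x by simp
    have "\<bar>amp_sinh m g k\<bar> * exp x = \<bar>amp_sin k * sin (freq m g k * (pi/2))\<bar> * (exp x / sinh x)"
      unfolding amp_sinh_def x_def using False sx by (simp add: abs_mult x_def)
    also have "\<dots> \<le> freq_shift m g k * (pi/2) * 4"
      using defect(2) exp_le_four_sinh[OF x] sx by (intro mult_mono) (auto simp: divide_le_eq)
    finally show ?thesis using False unfolding amp_cosh_def x_def by (simp add: algebra_simps)
  qed
qed

lemma layer_bound:
  assumes m: "m > 0" and g: "g > 0" and k: "k \<ge> 1"
  shows "\<bar>layer_left m g k\<bar> \<le> 1 / m" "\<bar>layer_right m g k\<bar> \<le> 1 / m"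
proof -
  define E where "E = exp (hfreq g (freq m g k) * (pi/2))"
  have E: "E > 0" unfolding E_def by simp
  have "\<bar>real k * X * E / 2\<bar> \<le> 1 / m"
    if X: "\<bar>X\<bar> \<le> \<bar>amp_cosh m g k\<bar> + \<bar>amp_sinh m g k\<bar>" for X
  proof -
    have "\<bar>X\<bar> * E \<le> (\<bar>amp_cosh m g k\<bar> + \<bar>amp_sinh m g k\<bar>) * E" using X E by (intro mult_right_mono) auto
    also have "\<dots> \<le> 4 * (freq_shift m g k * (pi/2))" using amp_layer_bound[OF m g k] unfolding E_def .
    finally have "real k * (\<bar>X\<bar> * E) \<le> real k * (4 * (freq_shift m g k * (pi/2)))"
      by (rule mult_left_mono) simp
    also have "\<dots> = 4 * (real k * (freq_shift m g k * (pi/2)))" by simp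
    also have "\<dots> \<le> 4 * (1 / (2 * m))" using freq_shift_facts(3)[OF m g k] by (intro mult_left_mono) simp_all
    finally have "real k * (\<bar>X\<bar> * E) / 2 \<le> 1 / m" by simp
    then show ?thesis using E by (simp add: abs_mult)
  qed
  then show "\<bar>layer_left m g k\<bar> \<le> 1 / m" "\<bar>layer_right m g k\<bar> \<le> 1 / m"
    unfolding layer_left_def layer_right_def E_def[symmetric] by simp_all
qed

lemma Cj_corr1:
  assumes m: "m > 0" and g: "g > 0" and k: "k \<ge> 1"
  shows "Cj_norm_le j (corr m g 1 k) (1 / (8 * m\<^sup>2) + 1 / m)"
proof -
  let ?d = "freq_shift m g k"
  note F = freq_shift_facts[OF m g k]
  have "corr m g 1 k = (\<lambda>t. real k * cos (?d * t + - (?d * (pi/2))) + - real k)"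
    by (simp add: corr_def fun_eq_iff algebra_simps)
  moreover have "Cj_norm_le j (\<lambda>t. real k * cos (?d * t + - (?d * (pi/2))) + - real k) (1 / (8 * m\<^sup>2) + 1 / m)"
  proof (rule Cj_norm_le_cos)
    show "\<forall>t\<in>{0..pi}. \<bar>real k * cos (?d * t + - (?d * (pi/2))) + - real k\<bar> \<le> 1 / (8 * m\<^sup>2) + 1 / m"
    proof
      fix t :: real assume t: "t \<in> {0..pi}"
      define y where "y = ?d * (t - pi/2)"
      have "\<bar>t - pi/2\<bar> \<le> pi/2" using t by (auto simp: abs_if)
      then have "\<bar>y\<bar> \<le> ?d * (pi/2)" unfolding y_def using F(1) by (simp add: abs_mult mult_left_mono)
      then have y2: "y\<^sup>2 \<le> (?d * (pi/2))\<^sup>2" using power_mono[of "\<bar>y\<bar>" _ 2] by simp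
      have "real k * cos y + - real k = - (real k * (1 - cos y))" by (simp add: algebra_simps)
      moreover have "0 \<le> real k * (1 - cos y)" by simp
      ultimately have "\<bar>real k * cos y + - real k\<bar> = real k * (1 - cos y)" by linarith
      also have "\<dots> \<le> real k * ((?d * (pi/2))\<^sup>2 / 2)"
        using one_minus_cos_le[of y] y2 by (intro mult_left_mono) auto
      also have "\<dots> = (real k * (?d * (pi/2))) * (?d * (pi/2)) / 2" by (simp add: power2_eq_square)
      also have "\<dots> \<le> (1 / (2 * m)) * (1 / (2 * m)) / 2"
        using F(1,3,4) m by (intro divide_right_mono mult_mono) auto
      also have "\<dots> \<le> 1 / (8 * m\<^sup>2) + 1 / m" using m by (simp add: power2_eq_square)
      finally show "\<bar>real k * cos (?d * t + - (?d * (pi/2))) + - real k\<bar> \<le> 1 / (8 * m\<^sup>2) + 1 / m"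
        by (simp add: y_def algebra_simps)
    qed
    show "\<forall>l. 1 \<le> l \<longrightarrow> l \<le> j \<longrightarrow> \<bar>real k\<bar> * \<bar>?d\<bar> ^ l \<le> 1 / (8 * m\<^sup>2) + 1 / m"
      using freq_shift_pow_le[OF m g k] m by (simp add: add_increasing)
  qed
  ultimately show ?thesis by simp
qed

lemma Cj_corr2:
  assumes m: "m > 0" and g: "g > 0" and k: "k \<ge> 1"
  shows "Cj_norm_le j (corr m g 2 k) (1 / m)"
proof -
  let ?d = "freq_shift m g k"
  note F = freq_shift_facts[OF m g k]
  have "cos (?d * t + (- (?d * (pi/2)) - pi/2)) = sin (?d * (t - pi/2))" for t
  proof -
    have arg: "?d * t + (- (?d * (pi/2)) - pi/2) = ?d * (t - pi/2) - pi/2" by (simp add: algebra_simps)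
    show ?thesis unfolding arg by (simp add: cos_diff)
  qed
  then have "corr m g 2 k = (\<lambda>t. real k * cos (?d * t + (- (?d * (pi/2)) - pi/2)) + 0)"
    by (simp add: corr_def fun_eq_iff)
  moreover have "Cj_norm_le j (\<lambda>t. real k * cos (?d * t + (- (?d * (pi/2)) - pi/2)) + 0) (1 / m)"
  proof (rule Cj_norm_le_cos)
    show "\<forall>t\<in>{0..pi}. \<bar>real k * cos (?d * t + (- (?d * (pi/2)) - pi/2)) + 0\<bar> \<le> 1 / m"
    proof
      fix t :: real assume t: "t \<in> {0..pi}"
      define y where "y = ?d * (t - pi/2)"
      have "\<bar>t - pi/2\<bar> \<le> pi/2" using t by (auto simp: abs_if)
      then have "\<bar>y\<bar> \<le> ?d * (pi/2)" unfolding y_def using F(1) by (simp add: abs_mult mult_left_mono)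
      have "\<bar>real k * cos (y - pi/2)\<bar> = real k * \<bar>sin y\<bar>" by (simp add: cos_diff abs_mult)
      also have "\<dots> \<le> real k * (?d * (pi/2))"
        using abs_sin_x_le_abs_x[of y] \<open>\<bar>y\<bar> \<le> _\<close> by (intro mult_left_mono) auto
      also have "\<dots> \<le> 1 / m" using F(3) m by (simp add: field_simps)
      finally show "\<bar>real k * cos (?d * t + (- (?d * (pi/2)) - pi/2)) + 0\<bar> \<le> 1 / m"
        by (simp add: y_def algebra_simps)
    qed
    show "\<forall>l. 1 \<le> l \<longrightarrow> l \<le> j \<longrightarrow> \<bar>real k\<bar> * \<bar>?d\<bar> ^ l \<le> 1 / m"
      using freq_shift_pow_le[OF m g k] by simp
  qed
  ultimately show ?thesis by simp
qed

lemma Cj_corr_layers: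
  assumes m: "m > 0" and g: "g > 0" and k: "k \<ge> 1"
  shows "Cj_norm_le j (corr m g 3 k) ((g + 1) ^ j / m)" "Cj_norm_le j (corr m g 4 k) ((g + 1) ^ j / m)"
proof -
  let ?q = "hfreq_shift m g k"
  note F = freq_shift_facts[OF m g k]
  have r: "\<bar>- ?q\<bar> \<le> g + 1" "\<bar>?q\<bar> \<le> g + 1" "1 \<le> g + 1" using F(5,6) g by auto
  have "corr m g 3 k = (\<lambda>t. layer_left m g k * exp ((- ?q) * t + 0))"
    by (simp add: corr_def fun_eq_iff)
  moreover have "Cj_norm_le j (\<lambda>t. layer_left m g k * exp ((- ?q) * t + 0)) (\<bar>layer_left m g k\<bar> * (g + 1) ^ j)"
    using F(5) by (intro Cj_norm_le_exp_decay r) auto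
  moreover have "\<bar>layer_left m g k\<bar> * (g + 1) ^ j \<le> (g + 1) ^ j / m"
    using mult_right_mono[OF layer_bound(1)[OF m g k], of "(g + 1) ^ j"] g by simp
  ultimately show "Cj_norm_le j (corr m g 3 k) ((g + 1) ^ j / m)" by (simp add: Cj_norm_le_mono)
  have "corr m g 4 k = (\<lambda>t. layer_right m g k * exp (?q * t + - (?q * pi)))"
    by (simp add: corr_def fun_eq_iff algebra_simps)
  moreover have "Cj_norm_le j (\<lambda>t. layer_right m g k * exp (?q * t + - (?q * pi))) (\<bar>layer_right m g k\<bar> * (g + 1) ^ j)"
    using F(5) by (intro Cj_norm_le_exp_decay r) (auto simp: mult_left_mono)
  moreover have "\<bar>layer_right m g k\<bar> * (g + 1) ^ j \<le> (g + 1) ^ j / m"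
    using mult_right_mono[OF layer_bound(2)[OF m g k], of "(g + 1) ^ j"] g by simp
  ultimately show "Cj_norm_le j (corr m g 4 k) ((g + 1) ^ j / m)" by (simp add: Cj_norm_le_mono)
qed

lemma corr_Cj_bounded:
  assumes m: "m > 0" and g: "g > 0"
  shows "\<exists>B. \<forall>i\<in>{1..4}. \<forall>k\<ge>1. Cj_norm_le j (corr m g i k) B"
proof (intro exI ballI allI impI)
  fix i k :: nat assume i: "i \<in> {1..4}" and k: "k \<ge> 1"
  define B where "B = 1 / (8 * m\<^sup>2) + 1 / m + (g + 1) ^ j / m"
  have B: "1 / (8 * m\<^sup>2) + 1 / m \<le> B" "1 / m \<le> B" "(g + 1) ^ j / m \<le> B"
    unfolding B_def using m g by auto
  consider "i = 1" | "i = 2" | "i = 3" | "i = 4" using i by force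
  then show "Cj_norm_le j (corr m g i k) B"
  proof cases
    case 1 then show ?thesis using Cj_norm_le_mono[OF Cj_corr1[OF m g k] B(1)] by simp
  next
    case 2 then show ?thesis using Cj_norm_le_mono[OF Cj_corr2[OF m g k] B(2)] by simp
  next
    case 3 then show ?thesis using Cj_norm_le_mono[OF Cj_corr_layers(1)[OF m g k] B(3)] by simp
  next
    case 4 then show ?thesis using Cj_norm_le_mono[OF Cj_corr_layers(2)[OF m g k] B(3)] by simp
  qed
qed

theorem lemma3p2:
  fixes m T \<gamma> :: real and lam :: "nat \<Rightarrow> real"
  assumes "m > 0" and "T > 0" and "\<gamma> = T / (pi * m)"
    and incr: "\<forall>k\<ge>1. lam k \<le> lam (Suc k)"
    and enum: "\<forall>mu. finite {k. k \<ge> 1 \<and> lam k = mu}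
                    \<and> card {k. k \<ge> 1 \<and> lam k = mu} = eig_mult T \<gamma> mu"
  shows "(\<lambda>k. lam k - real k ^ 4) \<in> O(\<lambda>k. real k ^ 2)
    \<and> (\<exists>(e :: nat \<Rightarrow> real \<Rightarrow> real) (g :: nat \<Rightarrow> nat \<Rightarrow> real \<Rightarrow> real).
          (\<forall>k\<ge>1. is_eigenfunction T \<gamma> (lam k) (e k))
        \<and> (\<forall>k\<ge>1. \<forall>t\<in>{0..pi}.
              e k t = sin (real k * t) + (1 / real k) * (\<Sum>i\<in>{1..4}. g i k t * fbasis i k t))
        \<and> (\<forall>j. \<exists>B. \<forall>i\<in>{1..4}. \<forall>k\<ge>1. Cj_norm_le j (g i k) B))"
proof -
  have m: "m > 0" and g: "\<gamma> > 0" using assms(1-3) by simp_all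
  have Tm: "T / (pi * \<gamma>) = m" using assms(1-3) by simp
  have lam: "\<forall>k\<ge>1. lam k = eigval \<gamma> (freq m \<gamma> k)"
    using eigenvalues_eq_eigval_freq[OF g m Tm incr enum] by blast
  show ?thesis
  proof (intro conjI exI[of _ "efun m \<gamma>"] exI[of _ "corr m \<gamma>"] allI impI ballI)
    show "(\<lambda>k. lam k - real k ^ 4) \<in> O(\<lambda>k. real k ^ 2)" by (rule eigenvalue_asymp[OF m g lam])
  next
    fix k :: nat assume "k \<ge> 1"
    then show "is_eigenfunction T \<gamma> (lam k) (efun m \<gamma> k)"
      using is_eigenfunction_efun[OF g m Tm] lam by simp
  next
    fix k :: nat and t :: real assume "k \<ge> 1"
    then show "efun m \<gamma> k t = sin (real k * t) + (1 / real k) * (\<Sum>i\<in>{1..4}. corr m \<gamma> i k t * fbasis i k t)"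
      by (rule efun_expansion)
  next
    fix j :: nat
    show "\<exists>B. \<forall>i\<in>{1..4}. \<forall>k\<ge>1. Cj_norm_le j (corr m \<gamma> i k) B" by (rule corr_Cj_bounded[OF m g])
  qed
qed

end
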